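(* Let $S=\Gamma\backslash\mathbb H$ be a hyperbolic surface with at least one cusp, let $u\in T^1S$ be cusp-recurrent and let $\tilde u\in T^1\mathbb H$ be a lift of $u$. Then there exists a sequence of pairs $(\tilde H_n,p_n)_{n\in\mathbb N}$, where $p_n\in\Gamma$ is parabolic with fixed point $x_n\in\partial\mathbb H$ and $\tilde H_n$ is a horocycle centered at $x_n$ (hence preserved by $p_n$), such that: (1) $\tilde u$ is tangent to the oriented pair $(\tilde H_n,p_n)$ for every $n$; (2) the tangency point is $\tilde u(t_n)$, where $(t_n)$ is an increasing sequence of nonnegative numbers tending to $+\infty$; (3) the points $x_n$ are pairwise distinct and form a monotonic sequence converging to $\tilde u(+\infty)$ (monotonic in the sense of boundary coordinates after normalizing $\tilde u(+\infty)=\infty$); (4) the horoballs bounded by the $\tilde H_n$ are pairwise disjoint; (5) $\ell(\tilde H_n,p_n)\to 0$.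
   Context: $\mathbb H$ is the upper half-plane, $\partial\mathbb H=\mathbb R\cup\{\infty\}$. For $v\in T^1\mathbb H$, $t\mapsto v(t)$ is the unit-speed geodesic with initial vector $v$, $v(+\infty)$ its forward endpoint. $\Gamma$ is a torsion-free Fuchsian group, $S=\Gamma\backslash\mathbb H$. A closed horocycle in $S$ is the projection of a horocycle centered at the fixed point of a parabolic element of $\Gamma$. $u\in T^1S$ is cusp-recurrent if for a lift $\tilde u$, $\tilde u(+\infty)$ is not fixed by a parabolic element of $\Gamma$ (the ray does not escape through a cusp) and there are closed horocycles $H_n$ in $S$ with lengths $\to0$ and times $t_n\ge0$ with $u(t_n)\in H_n$. For a horocycle $\tilde H$ and a parabolic $p$ preserving it: $\ell(\tilde H,p)$ is the horocyclic arc length between $x$ and $px$, $x\in\tilde H$; positive orientation is given by an arc-length parametrization with $p\tilde H(s)=\tilde H(s+\ell(\tilde H,p))$; $\tilde u$ is tangent to the oriented pair $(\tilde H,p)$ if $\tilde u(\mathbb R^+)$ is tangent to $\tilde H$ at $\tilde u(t_0)=\tilde H(s_0)$, $t_0\ge0$, with $\frac{d\tilde u}{dt}(t_0)=\frac{d\tilde H}{ds}(s_0)$ for a positively oriented parametrization. *)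

theory Defs
  imports "HOL-Analysis.Analysis"
begin

type_synonym mat2 = "real^2^2"

text \<open>Boundary of H: Some x is the real point x, None is the point infinity.\<close>
type_synonym bdpt = "real option"

definition mob :: "mat2 \<Rightarrow> complex \<Rightarrow> complex" where
  "mob M z = (of_real (M$1$1) * z + of_real (M$1$2)) / (of_real (M$2$1) * z + of_real (M$2$2))"

fun bd_act :: "mat2 \<Rightarrow> bdpt \<Rightarrow> bdpt" where
  "bd_act M None = (if M$2$1 = 0 then None else Some (M$1$1 / M$2$1))"
| "bd_act M (Some x) = (if M$2$1 * x + M$2$2 = 0 then None
                        else Some ((M$1$1 * x + M$1$2) / (M$2$1 * x + M$2$2)))"

definition mtrace :: "mat2 \<Rightarrow> real" where
  "mtrace M = M$1$1 + M$2$2"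

definition mpow :: "mat2 \<Rightarrow> nat \<Rightarrow> mat2" where
  "mpow M n = (((**) M) ^^ n) (mat 1)"

text \<open>A Fuchsian group, represented by its (full) preimage in SL(2,R):
  a subgroup of SL(2,R) containing -I, which is discrete.\<close>
definition fuchsian :: "mat2 set \<Rightarrow> bool" where
  "fuchsian G \<longleftrightarrow>
     (\<forall>M\<in>G. det M = 1) \<and> mat 1 \<in> G \<and> - mat 1 \<in> G \<and>
     (\<forall>M\<in>G. \<forall>N\<in>G. M ** N \<in> G) \<and> (\<forall>M\<in>G. matrix_inv M \<in> G) \<and>
     (\<exists>e>0. \<forall>M\<in>G. norm (M - mat 1) < e \<longrightarrow> M = mat 1)"

definition torsion_free :: "mat2 set \<Rightarrow> bool" where
  "torsion_free G \<longleftrightarrow>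
     (\<forall>M\<in>G. \<forall>n>0. (mpow M n = mat 1 \<or> mpow M n = - mat 1) \<longrightarrow> (M = mat 1 \<or> M = - mat 1))"

definition parabolic :: "mat2 \<Rightarrow> bool" where
  "parabolic M \<longleftrightarrow> M \<noteq> mat 1 \<and> M \<noteq> - mat 1 \<and> \<bar>mtrace M\<bar> = 2"

definition parabolic_fixed_point :: "mat2 set \<Rightarrow> bdpt \<Rightarrow> bool" where
  "parabolic_fixed_point G \<xi> \<longleftrightarrow> (\<exists>p\<in>G. parabolic p \<and> bd_act p \<xi> = \<xi>)"

definition hdist :: "complex \<Rightarrow> complex \<Rightarrow> real" where
  "hdist z w = arcosh (1 + (cmod (z - w))\<^sup>2 / (2 * Im z * Im w))"

text \<open>Unit tangent vectors of H: base point z in H and vector v with hyperbolic norm 1.\<close>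
definition T1H :: "(complex \<times> complex) set" where
  "T1H = {(z, v). Im z > 0 \<and> cmod v = Im z}"

definition geod :: "complex \<times> complex \<Rightarrow> real \<Rightarrow> complex" where
  "geod u = (THE \<gamma>. \<gamma> 0 = fst u \<and> (\<gamma> has_vector_derivative snd u) (at 0) \<and>
                     (\<forall>s. Im (\<gamma> s) > 0) \<and> (\<forall>s t. hdist (\<gamma> s) (\<gamma> t) = \<bar>s - t\<bar>))"

definition tends_to_bd :: "(real \<Rightarrow> complex) \<Rightarrow> bdpt \<Rightarrow> bool" where
  "tends_to_bd \<gamma> \<xi> = (case \<xi> of
      None \<Rightarrow> filterlim (\<lambda>t. cmod (\<gamma> t)) at_top at_top
    | Some x \<Rightarrow> (\<gamma> \<longlongrightarrow> complex_of_real x) at_top)"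

definition fwd_end :: "complex \<times> complex \<Rightarrow> bdpt" where
  "fwd_end u = (THE \<xi>. tends_to_bd (geod u) \<xi>)"

text \<open>Horocycle centered at xi with (Euclidean) size parameter r > 0:
  circle of radius r tangent to R at x, or horizontal line Im z = r.\<close>
fun horocycle :: "bdpt \<Rightarrow> real \<Rightarrow> complex set" where
  "horocycle None r = {z. Im z = r}"
| "horocycle (Some x) r = {z. Im z > 0 \<and> cmod (z - Complex x r) = r}"

fun horoball :: "bdpt \<Rightarrow> real \<Rightarrow> complex set" where
  "horoball None r = {z. Im z > r}"
| "horoball (Some x) r = {z. cmod (z - Complex x r) < r}"

text \<open>H is a (hyperbolic) arc-length parametrization of the curve C.\<close>
definition arclen_param :: "(real \<Rightarrow> complex) \<Rightarrow> complex set \<Rightarrow> bool" where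
  "arclen_param H C \<longleftrightarrow> bij_betw H UNIV C \<and>
     (\<forall>s. \<exists>v. (H has_vector_derivative v) (at s) \<and> cmod v = Im (H s))"

text \<open>Length of the closed horocycle in S obtained by projecting the horocycle
  horocycle xi r (xi a parabolic fixed point): the smallest positive
  horocyclic translation length of an element of G fixing xi.\<close>
definition closed_horo_length :: "mat2 set \<Rightarrow> bdpt \<Rightarrow> real \<Rightarrow> real" where
  "closed_horo_length G \<xi> r = Inf {l. l > 0 \<and> (\<exists>p\<in>G. parabolic p \<and> bd_act p \<xi> = \<xi> \<and>
       (\<exists>H. arclen_param H (horocycle \<xi> r) \<and> (\<forall>s. mob p (H s) = H (s + l))))}"

text \<open>Cusp-recurrence of u in T^1 S, expressed through a lift u' in T^1 H.\<close>
definition cusp_recurrent :: "mat2 set \<Rightarrow> complex \<times> complex \<Rightarrow> bool" where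
  "cusp_recurrent G u \<longleftrightarrow>
     \<not> parabolic_fixed_point G (fwd_end u) \<and>
     (\<exists>\<xi> r t. (\<forall>n. t n \<ge> 0 \<and> parabolic_fixed_point G (\<xi> n) \<and> r n > 0 \<and>
                    geod u (t n) \<in> horocycle (\<xi> n) (r n)) \<and>
              (\<lambda>n. closed_horo_length G (\<xi> n) (r n)) \<longlonglongrightarrow> 0)"

end

theory Submission
  imports Defs
begin

text \<open>Move to the frame \<open>g\<close> of \<open>u\<close>, in which the geodesic of \<open>u\<close> is \<open>s \<mapsto> \<i> e\<^sup>s\<close> and ends at \<open>\<infinity>\<close>.
  A closed horocycle crossed by the geodesic at a time \<open>t \<ge> 0\<close> is then centred at a real point \<open>y\<close>, its
  parabolic is \<open>parab_mat e k y\<close>, and the crossing forces its translation length \<open>l\<close> to dominate both \<open>\<bar>k\<bar>\<close>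
  and \<open>2 \<bar>y\<bar> \<bar>k\<bar>\<close>. Cusp recurrence provides such horocycles with \<open>l \<longrightarrow> 0\<close>, and discreteness, which bounds
  \<open>\<bar>k\<bar> (1 + \<bar>y\<bar>)\<^sup>2\<close> from below, then forces \<open>\<bar>y\<bar> \<longrightarrow> \<infinity>\<close>. The horocycle at \<open>y\<close> of Euclidean radius \<open>\<bar>y\<bar>\<close>
  touches the imaginary axis at \<open>\<i> \<bar>y\<bar>\<close>, so it is tangent to the geodesic at time \<open>ln \<bar>y\<bar>\<close>, with
  translation length \<open>2 \<bar>y\<bar> \<bar>k\<bar> \<le> l\<close>. Along a subsequence the \<open>y\<close> are monotone with increasing \<open>\<bar>y\<bar>\<close>,
  and Shimizu's lemma, \<open>\<bar>k\<^sub>1 k\<^sub>2\<bar> (y\<^sub>1 - y\<^sub>2)\<^sup>2 \<ge> 1\<close>, makes the horoballs of radii \<open>\<bar>y\<^sub>1\<bar>\<close> and \<open>\<bar>y\<^sub>2\<bar>\<close>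
  disjoint as soon as both translation lengths are at most \<open>1\<close>.\<close>

section \<open>Matrices in SL(2,R) and their action on the upper half-plane\<close>

definition mat2_of :: "real \<Rightarrow> real \<Rightarrow> real \<Rightarrow> real \<Rightarrow> mat2" where
  "mat2_of a b c d = vector [vector [a, b], vector [c, d]]"

lemma mat2_of_nth [simp]:
  "mat2_of a b c d $1$1 = a" "mat2_of a b c d $1$2 = b"
  "mat2_of a b c d $2$1 = c" "mat2_of a b c d $2$2 = d"
  by (simp_all add: mat2_of_def vector_def)

lemma mat2_eq_iff:
  "(M::mat2) = N \<longleftrightarrow> M$1$1 = N$1$1 \<and> M$1$2 = N$1$2 \<and> M$2$1 = N$2$1 \<and> M$2$2 = N$2$2"
  by (auto simp: vec_eq_iff forall_2)

lemma mat2_eq_mat2_of: "(M::mat2) = mat2_of (M$1$1) (M$1$2) (M$2$1) (M$2$2)"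
  by (simp add: mat2_eq_iff)

lemma mat2_mult_nth [simp]:
  "((A::mat2) ** B)$1$1 = A$1$1 * B$1$1 + A$1$2 * B$2$1"
  "(A ** B)$1$2 = A$1$1 * B$1$2 + A$1$2 * B$2$2"
  "(A ** B)$2$1 = A$2$1 * B$1$1 + A$2$2 * B$2$1"
  "(A ** B)$2$2 = A$2$1 * B$1$2 + A$2$2 * B$2$2"
  by (simp_all add: matrix_matrix_mult_def sum_2)

lemma mat2_one_nth [simp]:
  "(mat 1::mat2)$1$1 = 1" "(mat 1::mat2)$1$2 = 0" "(mat 1::mat2)$2$1 = 0" "(mat 1::mat2)$2$2 = 1"
  by (simp_all add: mat_def)

definition adj2 :: "mat2 \<Rightarrow> mat2" where
  "adj2 M = mat2_of (M$2$2) (-M$1$2) (-M$2$1) (M$1$1)"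

lemma adj2_nth [simp]:
  "adj2 M$1$1 = M$2$2" "adj2 M$1$2 = -M$1$2" "adj2 M$2$1 = -M$2$1" "adj2 M$2$2 = M$1$1"
  by (simp_all add: adj2_def)

lemma mult_adj2: "det M = 1 \<Longrightarrow> M ** adj2 M = mat 1"
  by (simp add: mat2_eq_iff det_2 algebra_simps)

lemma adj2_mult_self: "det M = 1 \<Longrightarrow> adj2 M ** M = mat 1"
  by (simp add: mat2_eq_iff det_2 algebra_simps)

lemma det_adj2 [simp]: "det (adj2 M) = det M"
  by (simp add: det_2)

lemma adj2_adj2 [simp]: "adj2 (adj2 M) = M"
  by (simp add: mat2_eq_iff)

lemma adj2_mult: "adj2 (A ** B) = adj2 B ** adj2 A"
  by (simp add: mat2_eq_iff algebra_simps)

lemma adj2_mult_cancel: "det B = 1 \<Longrightarrow> adj2 B ** (B ** Z) = Z"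
  by (simp add: matrix_mul_assoc adj2_mult_self matrix_mul_lid)

lemma mult_adj2_cancel: "det B = 1 \<Longrightarrow> B ** (adj2 B ** Z) = Z"
  by (simp add: matrix_mul_assoc mult_adj2 matrix_mul_lid)

lemma matrix_inv_eq_adj2:
  assumes "det M = 1"
  shows "matrix_inv M = adj2 M"
proof -
  have "\<exists>A'. M ** A' = mat 1 \<and> A' ** M = mat 1"
    using mult_adj2[OF assms] adj2_mult_self[OF assms] by blast
  then have inv: "matrix_inv M ** M = mat 1"
    unfolding matrix_inv_def by (rule someI_ex[where P = "\<lambda>A'. M ** A' = mat 1 \<and> A' ** M = mat 1", THEN conjunct2])
  have "matrix_inv M = matrix_inv M ** (M ** adj2 M)"
    using mult_adj2[OF assms] by (simp add: matrix_mul_rid)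
  also have "\<dots> = adj2 M"
    by (simp add: matrix_mul_assoc inv matrix_mul_lid)
  finally show ?thesis .
qed

lemma mtrace_mult_commute: "mtrace (A ** B) = mtrace (B ** A)"
  by (simp add: mtrace_def algebra_simps)

lemma mtrace_conj: "det A = 1 \<Longrightarrow> mtrace (adj2 A ** p ** A) = mtrace p"
  using mtrace_mult_commute[of "adj2 A ** p" A] by (simp add: mult_adj2_cancel)

lemma conj_conj_cancel: "det A = 1 \<Longrightarrow> A ** (adj2 A ** p ** A) ** adj2 A = p"
  by (simp add: matrix_mul_assoc[symmetric] adj2_mult_cancel mult_adj2_cancel mult_adj2 matrix_mul_rid)

lemma conj_mult: "det B = 1 \<Longrightarrow> (B ** X ** adj2 B) ** (B ** Y ** adj2 B) = B ** (X ** Y) ** adj2 B"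
  by (simp add: matrix_mul_assoc[symmetric] adj2_mult_cancel)

lemma conj_adj2: "det B = 1 \<Longrightarrow> adj2 (B ** X ** adj2 B) = B ** adj2 X ** adj2 B"
  by (simp add: adj2_mult matrix_mul_assoc)

lemma conj_diff:
  fixes B X Y C :: mat2
  shows "B ** (X - Y) ** C = B ** X ** C - B ** Y ** C"
  by (simp add: mat2_eq_iff algebra_simps)

lemma conj_one: "det B = 1 \<Longrightarrow> B ** mat 1 ** adj2 B = mat 1"
  by (simp add: matrix_mul_rid mult_adj2)

lemma conj_uminus:
  fixes B X C :: mat2
  shows "B ** (- X) ** C = - (B ** X ** C)"
  by (simp add: mat2_eq_iff algebra_simps)

lemma parabolic_conj:
  assumes A: "det A = 1" and p: "parabolic p"
  shows "parabolic (adj2 A ** p ** A)"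
proof -
  have "adj2 A ** p ** A \<noteq> c" if "c = mat 1 \<or> c = - mat 1" for c
  proof
    assume "adj2 A ** p ** A = c"
    then have "p = A ** c ** adj2 A" using conj_conj_cancel[OF A, of p] by simp
    then show False
      using that p conj_one[OF A] conj_uminus[of A "mat 1" "adj2 A"] unfolding parabolic_def by auto
  qed
  then show ?thesis using p mtrace_conj[OF A] unfolding parabolic_def by simp
qed

definition mob_den :: "mat2 \<Rightarrow> complex \<Rightarrow> complex" where
  "mob_den M z = of_real (M$2$1) * z + of_real (M$2$2)"

lemma of_real_det_1:
  "det (M::mat2) = 1 \<Longrightarrow> of_real (M$1$1) * of_real (M$2$2) - of_real (M$1$2) * of_real (M$2$1) = (1::complex)"
  unfolding det_2 by (metis of_real_1 of_real_mult of_real_diff)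

lemma mob_den_nonzero:
  assumes "det M \<noteq> 0" "Im z > 0"
  shows "mob_den M z \<noteq> 0"
proof
  assume "mob_den M z = 0"
  then have "M$2$1 * Im z = 0" "M$2$1 * Re z + M$2$2 = 0"
    unfolding mob_den_def by (auto simp: complex_eq_iff)
  then have "M$2$1 = 0" "M$2$2 = 0" using assms(2) by auto
  then show False using assms(1) by (simp add: det_2)
qed

lemma mob_eq_div_den: "mob M z = (of_real (M$1$1) * z + of_real (M$1$2)) / mob_den M z"
  by (simp add: mob_def mob_den_def)

lemma Im_mob:
  assumes "Im z > 0" "det M \<noteq> 0"
  shows "Im (mob M z) = det M * Im z / (cmod (mob_den M z))\<^sup>2"
proof -
  have den: "mob_den M z = Complex (M$2$1 * Re z + M$2$2) (M$2$1 * Im z)"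
    by (simp add: mob_den_def complex_eq_iff)
  have num: "of_real (M$1$1) * z + of_real (M$1$2) = Complex (M$1$1 * Re z + M$1$2) (M$1$1 * Im z)"
    by (simp add: complex_eq_iff)
  have "M$1$1 * Im z * (M$2$1 * Re z + M$2$2) - (M$1$1 * Re z + M$1$2) * (M$2$1 * Im z) = det M * Im z"
    by (simp add: det_2 algebra_simps)
  then show ?thesis
    unfolding mob_eq_div_den den num cmod_power2 Im_divide by (simp only: complex.sel)
qed

lemma Im_mob_pos:
  assumes "Im z > 0" "det M = 1"
  shows "Im (mob M z) > 0"
  using Im_mob[OF assms(1)] assms mob_den_nonzero[of M z] by simp

lemma mob_mult:
  assumes "det A \<noteq> 0" "det B \<noteq> 0" "Im z > 0"
  shows "mob (A ** B) z = mob A (mob B z)"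
proof -
  let ?p = "of_real (B$1$1) * z + of_real (B$1$2)" and ?q = "mob_den B z"
  have q: "?q \<noteq> 0" using mob_den_nonzero assms by auto
  have "mob_den (A ** B) z \<noteq> 0" using mob_den_nonzero assms by (auto simp: det_mul)
  moreover have "mob_den (A ** B) z = of_real (A$2$1) * ?p + of_real (A$2$2) * ?q"
    unfolding mob_den_def by (simp add: algebra_simps)
  ultimately have pq: "of_real (A$2$1) * ?p + of_real (A$2$2) * ?q \<noteq> 0" by simp
  have "of_real (A$1$1) * (?p / ?q) + of_real (A$1$2) = (of_real (A$1$1) * ?p + of_real (A$1$2) * ?q) / ?q"
       "of_real (A$2$1) * (?p / ?q) + of_real (A$2$2) = (of_real (A$2$1) * ?p + of_real (A$2$2) * ?q) / ?q"
    using q by (simp_all add: field_simps)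
  then have "mob A (mob B z) = (of_real (A$1$1) * ?p + of_real (A$1$2) * ?q) / (of_real (A$2$1) * ?p + of_real (A$2$2) * ?q)"
    unfolding mob_eq_div_den[of B] unfolding mob_def using q pq by simp
  also have "\<dots> = mob (A ** B) z"
    unfolding mob_def mob_den_def by (simp add: algebra_simps)
  finally show ?thesis by simp
qed

lemma mob_one [simp]: "mob (mat 1) z = z"
  by (simp add: mob_def)

lemma mob_adj2_mob: "det M = 1 \<Longrightarrow> Im z > 0 \<Longrightarrow> mob (adj2 M) (mob M z) = z"
  using mob_mult[of "adj2 M" M z] by (simp add: adj2_mult_self)

lemma mob_mob_adj2: "det M = 1 \<Longrightarrow> Im z > 0 \<Longrightarrow> mob M (mob (adj2 M) z) = z"
  using mob_mult[of M "adj2 M" z] by (simp add: mult_adj2)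

lemma mob_conj:
  assumes A: "det A = 1" and q: "det q = 1" and w: "Im w > 0"
  shows "mob (A ** q ** adj2 A) (mob A w) = mob A (mob q w)"
proof -
  have "mob (A ** q ** adj2 A) (mob A w) = mob (A ** q ** adj2 A ** A) w"
    using mob_mult[of "A ** q ** adj2 A" A w] A q w by (simp add: det_mul)
  also have "A ** q ** adj2 A ** A = A ** q"
    by (simp add: matrix_mul_assoc[symmetric] adj2_mult_self A matrix_mul_rid)
  also have "mob (A ** q) w = mob A (mob q w)" using mob_mult[of A q w] A q w by simp
  finally show ?thesis .
qed

lemma mob_has_field_derivative:
  assumes "det M = 1" "mob_den M z \<noteq> 0"
  shows "(mob M has_field_derivative 1 / (mob_den M z)\<^sup>2) (at z)"
proof -
  let ?a = "of_real (M$1$1) :: complex" and ?b = "of_real (M$1$2) :: complex"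
  let ?c = "of_real (M$2$1) :: complex" and ?d = "of_real (M$2$2) :: complex"
  have "((\<lambda>z. (?a * z + ?b) / (?c * z + ?d)) has_field_derivative
     ((?a * (?c * z + ?d) - (?a * z + ?b) * ?c) / ((?c * z + ?d) * (?c * z + ?d)))) (at z)"
    using assms(2) unfolding mob_den_def by (auto intro!: derivative_eq_intros)
  moreover have "?a * (?c * z + ?d) - (?a * z + ?b) * ?c = ?a * ?d - ?b * ?c" by algebra
  ultimately show ?thesis
    unfolding mob_def[abs_def] mob_den_def using of_real_det_1[OF assms(1)] by (simp add: power2_eq_square)
qed

lemma mob_diff:
  assumes "det M = 1" "mob_den M z \<noteq> 0" "mob_den M w \<noteq> 0"
  shows "mob M z - mob M w = (z - w) / (mob_den M z * mob_den M w)"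
proof -
  let ?a = "of_real (M$1$1) :: complex" and ?b = "of_real (M$1$2) :: complex"
  let ?c = "of_real (M$2$1) :: complex" and ?d = "of_real (M$2$2) :: complex"
  have "(?a*z+?b)*(?c*w+?d) - (?a*w+?b)*(?c*z+?d) = (?a*?d-?b*?c)*(z-w)" by algebra
  then show ?thesis
    using assms(2,3) of_real_det_1[OF assms(1)] unfolding mob_def mob_den_def by (simp add: divide_simps)
qed

lemma hdist_mob:
  assumes "det M = 1" "Im z > 0" "Im w > 0"
  shows "hdist (mob M z) (mob M w) = hdist z w"
proof -
  define A B where "A = cmod (mob_den M z)" and "B = cmod (mob_den M w)"
  have dz: "mob_den M z \<noteq> 0" and dw: "mob_den M w \<noteq> 0" using mob_den_nonzero assms by auto
  then have AB: "A > 0" "B > 0" by (auto simp: A_def B_def)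
  have 1: "(cmod (mob M z - mob M w))\<^sup>2 = (cmod (z - w))\<^sup>2 / (A*B)\<^sup>2"
    unfolding mob_diff[OF assms(1) dz dw] A_def B_def by (simp add: norm_divide norm_mult power_divide)
  have 2: "Im (mob M z) = Im z / A\<^sup>2" "Im (mob M w) = Im w / B\<^sup>2"
    using Im_mob assms unfolding A_def B_def by auto
  have "(cmod (mob M z - mob M w))\<^sup>2 / (2 * Im (mob M z) * Im (mob M w)) =
        (cmod (z - w))\<^sup>2 / (2 * Im z * Im w)"
    unfolding 1 2 using AB by (simp add: field_simps power2_eq_square)
  then show ?thesis unfolding hdist_def by simp
qed

lemma bd_act_mult:
  assumes A: "det A = 1" and B: "det B = 1"
  shows "bd_act (A ** B) \<xi> = bd_act A (bd_act B \<xi>)"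
proof -
  have frac: "(a*p/q + b)/(c*p/q + d) = (a*p + b*q)/(c*p + d*q)"
    and zero: "(c*p/q + d = 0) \<longleftrightarrow> (c*p + d*q = 0)" if "q \<noteq> 0" for a b c d p q :: real
  proof -
    have "a*p/q + b = (a*p + b*q)/q" "c*p/q + d = (c*p + d*q)/q" using that by (simp_all add: field_simps)
    then show "(a*p/q + b)/(c*p/q + d) = (a*p + b*q)/(c*p + d*q)" "(c*p/q + d = 0) \<longleftrightarrow> (c*p + d*q = 0)"
      using that by simp_all
  qed
  show ?thesis
  proof (cases \<xi>)
    case None
    show ?thesis
    proof (cases "B$2$1 = 0")
      case True
      then have "B$1$1 \<noteq> 0" using B by (auto simp: det_2)
      then show ?thesis using True None by (simp add: field_simps)
    next
      case False
      then show ?thesis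
        using None frac[OF False, of "A$1$1" "B$1$1" "A$1$2" "A$2$1" "A$2$2"] zero[OF False, of "A$2$1" "B$1$1" "A$2$2"]
        by simp
    qed
  next
    case (Some x)
    define p q where "p = B$1$1 * x + B$1$2" and "q = B$2$1 * x + B$2$2"
    have den: "(A ** B)$2$1 * x + (A ** B)$2$2 = A$2$1 * p + A$2$2 * q"
      and num: "(A ** B)$1$1 * x + (A ** B)$1$2 = A$1$1 * p + A$1$2 * q"
      unfolding p_def q_def by (simp_all add: algebra_simps)
    have AB: "bd_act (A ** B) \<xi> = (if A$2$1 * p + A$2$2 * q = 0 then None
        else Some ((A$1$1 * p + A$1$2 * q) / (A$2$1 * p + A$2$2 * q)))"
      using Some by (simp only: bd_act.simps den num)
    show ?thesis
    proof (cases "q = 0")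
      case True
      have "p \<noteq> 0"
      proof
        assume "p = 0"
        then have "B$1$2 = - B$1$1 * x" "B$2$2 = - B$2$1 * x" using True unfolding p_def q_def by auto
        then show False using B by (simp add: det_2 algebra_simps)
      qed
      moreover have "bd_act B \<xi> = None" using True Some by (simp add: q_def)
      ultimately show ?thesis unfolding AB using True by simp
    next
      case False
      have "bd_act B \<xi> = Some (p/q)" using False Some unfolding p_def q_def by simp
      then show ?thesis
        unfolding AB using frac[OF False, of "A$1$1" p "A$1$2" "A$2$1" "A$2$2"] zero[OF False, of "A$2$1" p "A$2$2"]
        by simp
    qed
  qed
qed

lemma bd_act_one [simp]: "bd_act (mat 1) \<xi> = \<xi>"
  by (cases \<xi>) auto

lemma bd_act_adj2_bd_act: "det M = 1 \<Longrightarrow> bd_act (adj2 M) (bd_act M \<xi>) = \<xi>"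
  using bd_act_mult[of "adj2 M" M \<xi>] by (simp add: adj2_mult_self)

lemma bd_act_bd_act_adj2: "det M = 1 \<Longrightarrow> bd_act M (bd_act (adj2 M) \<xi>) = \<xi>"
  using bd_act_mult[of M "adj2 M" \<xi>] by (simp add: mult_adj2)

text \<open>\<open>parab_mat e k y\<close> is the sign \<open>e\<close> times the conjugate of the translation \<open>w \<mapsto> w + k\<close> by
  \<open>inf_to y\<close>, which maps \<open>\<infinity>\<close> to \<open>y\<close>.\<close>

definition parab_mat :: "real \<Rightarrow> real \<Rightarrow> real \<Rightarrow> mat2" where
  "parab_mat e k y = mat2_of (e*(1 - k*y)) (e*k*y^2) (-e*k) (e*(1 + k*y))"

definition inf_to :: "real \<Rightarrow> mat2" where
  "inf_to y = mat2_of y (-1) 1 0"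

lemma det_parab_mat: "e*e = 1 \<Longrightarrow> det (parab_mat e k y) = 1"
  unfolding parab_mat_def det_2 mat2_of_nth by (simp add: power2_eq_square algebra_simps)

lemma det_inf_to [simp]: "det (inf_to y) = 1"
  by (simp add: inf_to_def det_2)

lemma bd_act_inf_to: "bd_act (inf_to y) None = Some y"
  by (simp add: inf_to_def)

lemma bd_act_adj2_inf_to: "bd_act (adj2 (inf_to y)) (Some y) = None"
  using bd_act_adj2_bd_act[of "inf_to y" None] bd_act_inf_to[of y] by simp

lemma parab_mat_conj_inf_to:
  "adj2 (inf_to x) ** parab_mat e k y ** inf_to x
     = mat2_of (e*(1 - k*(x-y))) (e*k) (-e*k*(x-y)^2) (e*(1 + k*(x-y)))"
  unfolding mat2_eq_iff mat2_mult_nth adj2_nth inf_to_def parab_mat_def mat2_of_nth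
  by (simp add: power2_eq_square algebra_simps)

lemma parab_mat_conj_inf_to_same: "adj2 (inf_to y) ** parab_mat e k y ** inf_to y = mat2_of e (e*k) 0 e"
  using parab_mat_conj_inf_to[of y e k y] by simp

lemma parab_mat_neg: "parab_mat (-1) k y = - parab_mat 1 k y"
  by (simp add: parab_mat_def mat2_eq_iff)

lemma parab_mat_neq_one: "k \<noteq> 0 \<Longrightarrow> parab_mat 1 k y \<noteq> mat 1"
  by (simp add: parab_mat_def mat2_eq_iff)

lemma mob_translation: "e \<noteq> 0 \<Longrightarrow> mob (mat2_of e (e*k) 0 e) w = w + of_real k"
  by (simp add: mob_def field_simps)

lemma parabolic_fixing_real:
  assumes "det q = 1" and "parabolic q" and "bd_act q (Some y) = Some y"
  shows "\<exists>e k. (e = 1 \<or> e = -1) \<and> k \<noteq> 0 \<and> q = parab_mat e k y"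
proof -
  obtain a b c d where q: "q = mat2_of a b c d" by (metis mat2_eq_mat2_of)
  have det: "a*d - b*c = 1" using assms(1) q by (simp add: det_2)
  define e where "e = (a + d)/2"
  have "\<bar>a + d\<bar> = 2" using assms(2) q unfolding parabolic_def mtrace_def by simp
  then have e: "e = 1 \<or> e = -1" unfolding e_def by (auto simp: abs_if split: if_splits)
  have tr: "a + d = 2*e" unfolding e_def by simp
  have e2: "e*e = 1" using e by auto
  have "c*y + d \<noteq> 0" and "(a*y + b)/(c*y + d) = y" using assms(3) q by (auto split: if_splits)
  then have b: "b = c*y^2 + (d - a)*y" by (simp add: field_simps power2_eq_square)
  have "(a - e - c*y)^2 = (a*a - 2*e*a + e*e) - 2*c*y*(a-e) + c^2*y^2"
    by (simp add: power2_eq_square algebra_simps)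
  also have "\<dots> = 0" using det tr e2 b unfolding power2_eq_square by algebra
  finally have a: "a = e + c*y" by simp
  have d: "d = e - c*y" using tr a by simp
  have b': "b = - c*y^2" using b a d by (simp add: power2_eq_square algebra_simps)
  have c0: "c \<noteq> 0"
  proof
    assume "c = 0"
    then have "q = mat2_of e 0 0 e" using q a d b' by simp
    then have "q = mat 1 \<or> q = - mat 1" using e by (auto simp: mat2_eq_iff)
    then show False using assms(2) unfolding parabolic_def by auto
  qed
  show ?thesis
    using e c0 q a d b' e2 by (intro exI[of _ e] exI[of _ "-e*c"]) (auto simp: parab_mat_def mat2_eq_iff algebra_simps)
qed

lemma parabolic_fixing_inf:
  assumes "det p = 1" and "parabolic p" and "bd_act p None = None"
  shows "\<exists>e \<tau>. e*e = 1 \<and> \<tau> \<noteq> 0 \<and> p = mat2_of e (e*\<tau>) 0 e"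
proof -
  obtain a b c d where p: "p = mat2_of a b c d" by (metis mat2_eq_mat2_of)
  have c: "c = 0" using assms(3) p by (auto split: if_splits)
  have det: "a*d = 1" using assms(1) p c by (simp add: det_2)
  define e where "e = (a + d)/2"
  have "\<bar>a + d\<bar> = 2" using assms(2) p unfolding parabolic_def mtrace_def by simp
  then have "e = 1 \<or> e = -1" unfolding e_def by (auto simp: abs_if split: if_splits)
  then have e: "e*e = 1" by auto
  have "(a - e)^2 = a*a - a*(a+d) + e*e" unfolding e_def by (simp add: power2_eq_square field_simps)
  then have a: "a = e" using det e by (simp add: algebra_simps)
  have d: "d = e" using a e_def by simp
  have b: "b \<noteq> 0"
  proof
    assume "b = 0"
    then have "p = mat2_of e 0 0 e" using p a d c by simp
    then have "p = mat 1 \<or> p = - mat 1" using e by (auto simp: mat2_eq_iff) (metis mult_cancel_left1 square_eq_1_iff)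
    then show False using assms(2) unfolding parabolic_def by auto
  qed
  show ?thesis
    using e b p a d c by (intro exI[of _ e] exI[of _ "e*b"]) (auto simp: mat2_eq_iff mult.assoc[symmetric])
qed

section \<open>Horocycles as level sets of a height function\<close>

definition to_inf :: "bdpt \<Rightarrow> mat2" where
  "to_inf \<xi> = (case \<xi> of None \<Rightarrow> mat 1 | Some x \<Rightarrow> adj2 (inf_to x))"

definition horo_height :: "bdpt \<Rightarrow> complex \<Rightarrow> real" where
  "horo_height \<xi> z = Im (mob (to_inf \<xi>) z)"

fun horo_level :: "bdpt \<Rightarrow> real \<Rightarrow> real" where
  "horo_level None r = r"
| "horo_level (Some x) r = 1 / (2 * r)"

fun horo_level_inv :: "bdpt \<Rightarrow> real \<Rightarrow> real" where
  "horo_level_inv None v = v"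
| "horo_level_inv (Some x) v = 1 / (2 * v)"

lemma horo_level_horo_level_inv: "v > 0 \<Longrightarrow> horo_level \<xi> (horo_level_inv \<xi> v) = v"
  by (cases \<xi>) auto

lemma horo_level_inv_pos: "v > 0 \<Longrightarrow> horo_level_inv \<xi> v > 0"
  by (cases \<xi>) auto

lemma horo_level_pos: "r > 0 \<Longrightarrow> horo_level \<xi> r > 0"
  by (cases \<xi>) auto

lemma det_to_inf [simp]: "det (to_inf \<xi>) = 1"
  by (cases \<xi>) (auto simp: to_inf_def)

lemma bd_act_to_inf: "bd_act (to_inf \<xi>) \<xi> = None"
  by (cases \<xi>) (simp add: to_inf_def, simp only: to_inf_def option.case bd_act_adj2_inf_to)

lemma horo_height_None: "horo_height None z = Im z"
  by (simp add: horo_height_def to_inf_def)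

lemma horo_height_Some:
  assumes "Im z > 0"
  shows "horo_height (Some x) z = Im z / (cmod (z - of_real x))\<^sup>2"
proof -
  have "mob_den (adj2 (inf_to x)) z = - (z - of_real x)"
    by (simp add: mob_den_def inf_to_def)
  then show ?thesis
    unfolding horo_height_def to_inf_def using Im_mob[OF assms, of "adj2 (inf_to x)"]
    by (simp add: norm_minus_commute)
qed

lemma horocycle_iff_height:
  assumes "r > 0"
  shows "z \<in> horocycle \<xi> r \<longleftrightarrow> Im z > 0 \<and> horo_height \<xi> z = horo_level \<xi> r"
proof (cases \<xi>)
  case (Some x)
  have "(cmod (z - Complex x r))\<^sup>2 = (cmod (z - of_real x))\<^sup>2 - 2*r*Im z + r\<^sup>2"
    unfolding cmod_power2 by (simp add: power2_eq_square algebra_simps)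
  then have "cmod (z - Complex x r) = r \<longleftrightarrow> (cmod (z - of_real x))\<^sup>2 = 2*r*Im z"
    using power2_eq_iff_nonneg[of "cmod (z - Complex x r)" r] assms by auto
  moreover have "Im z > 0 \<Longrightarrow> cmod (z - of_real x) \<noteq> 0" by auto
  ultimately show ?thesis
    using Some assms by (auto simp: horo_height_Some field_simps)
qed (use assms in \<open>auto simp: horo_height_None\<close>)

lemma horoball_iff_height:
  assumes "r > 0"
  shows "z \<in> horoball \<xi> r \<longleftrightarrow> Im z > 0 \<and> horo_height \<xi> z > horo_level \<xi> r"
proof (cases \<xi>)
  case None
  then show ?thesis using assms by (auto simp: horo_height_None)
next
  case (Some x)
  have "(cmod (z - Complex x r))\<^sup>2 = (cmod (z - of_real x))\<^sup>2 - 2*r*Im z + r\<^sup>2"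
    unfolding cmod_power2 by (simp add: power2_eq_square algebra_simps)
  then have ball: "cmod (z - Complex x r) < r \<longleftrightarrow> (cmod (z - of_real x))\<^sup>2 < 2*r*Im z"
    using power_strict_mono[of "cmod (z - Complex x r)" r 2] power2_less_imp_less[of "cmod (z - Complex x r)" r] assms
    by auto
  have "Im z > 0" if "(cmod (z - of_real x))\<^sup>2 < 2*r*Im z"
    using that assms zero_le_power2[of "cmod (z - of_real x)"] by (smt (verit) mult_nonneg_nonpos)
  moreover have "Im z > 0 \<Longrightarrow> cmod (z - of_real x) \<noteq> 0" by auto
  ultimately show ?thesis
    using Some assms ball by (auto simp: horo_height_Some field_simps)
qed

lemma horocycle_Im_pos: "r > 0 \<Longrightarrow> z \<in> horocycle \<xi> r \<Longrightarrow> Im z > 0"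
  using horocycle_iff_height by blast

lemma horoball_Im_pos: "r > 0 \<Longrightarrow> z \<in> horoball \<xi> r \<Longrightarrow> Im z > 0"
  using horoball_iff_height by blast

lemma Im_mob_fixing_inf:
  assumes "det T = 1" "T$2$1 = 0" "Im w > 0"
  shows "Im (mob T w) = Im w / (T$2$2)\<^sup>2"
  using Im_mob[OF assms(3), of T] assms(1,2) by (simp add: mob_den_def)

lemma horo_height_mob:
  assumes A: "det A = 1"
  obtains k where "k > 0" "\<And>z. Im z > 0 \<Longrightarrow> horo_height (bd_act A \<xi>) (mob A z) = k * horo_height \<xi> z"
proof -
  define N N' where "N = to_inf \<xi>" and "N' = to_inf (bd_act A \<xi>)"
  define T where "T = N' ** A ** adj2 N"
  have dT: "det T = 1" unfolding T_def N_def N'_def using A by (simp add: det_mul)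
  have "bd_act (adj2 N) None = \<xi>"
    using bd_act_adj2_bd_act[of N \<xi>] bd_act_to_inf[of \<xi>] unfolding N_def by simp
  then have "bd_act T None = bd_act N' (bd_act A \<xi>)"
    unfolding T_def N_def N'_def using A by (simp only: bd_act_mult det_mul det_adj2 det_to_inf mult_1)
  then have "bd_act T None = None"
    unfolding N'_def by (simp only: bd_act_to_inf)
  then have T21: "T$2$1 = 0" by (auto split: if_splits)
  then have T22: "T$2$2 \<noteq> 0" using dT by (auto simp: det_2)
  have "T ** N = N' ** A"
    unfolding T_def N_def by (simp add: matrix_mul_assoc[symmetric] adj2_mult_self matrix_mul_rid)
  then have "mob N' (mob A z) = mob T (mob N z)" if "Im z > 0" for z
    using mob_mult[of N' A z] mob_mult[of T N z] that A dT unfolding N_def N'_def by simp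
  then have "horo_height (bd_act A \<xi>) (mob A z) = 1 / (T$2$2)\<^sup>2 * horo_height \<xi> z" if "Im z > 0" for z
    using that Im_mob_fixing_inf[OF dT T21 Im_mob_pos[OF that det_to_inf[of \<xi>]]]
    unfolding horo_height_def N_def N'_def by simp
  moreover have "1 / (T$2$2)\<^sup>2 > 0" using T22 by simp
  ultimately show thesis using that by blast
qed

lemma mob_horocycle_horoball_iff:
  assumes A: "det A = 1" and r: "r > 0"
  obtains r' where "r' > 0" "\<And>z. Im z > 0 \<Longrightarrow>
     (mob A z \<in> horocycle (bd_act A \<xi>) r' \<longleftrightarrow> z \<in> horocycle \<xi> r) \<and>
     (mob A z \<in> horoball (bd_act A \<xi>) r' \<longleftrightarrow> z \<in> horoball \<xi> r)"
proof -
  obtain k where k: "k > 0" and height: "\<And>z. Im z > 0 \<Longrightarrow> horo_height (bd_act A \<xi>) (mob A z) = k * horo_height \<xi> z"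
    using horo_height_mob[OF A] by blast
  define r' where "r' = horo_level_inv (bd_act A \<xi>) (k * horo_level \<xi> r)"
  have kh: "k * horo_level \<xi> r > 0" using k horo_level_pos[OF r] by simp
  have r': "r' > 0" unfolding r'_def using horo_level_inv_pos[OF kh] .
  have level: "horo_level (bd_act A \<xi>) r' = k * horo_level \<xi> r"
    unfolding r'_def using horo_level_horo_level_inv[OF kh] .
  show thesis
  proof (rule that[OF r'])
    fix z assume z: "Im z > 0"
    show "(mob A z \<in> horocycle (bd_act A \<xi>) r' \<longleftrightarrow> z \<in> horocycle \<xi> r) \<and>
        (mob A z \<in> horoball (bd_act A \<xi>) r' \<longleftrightarrow> z \<in> horoball \<xi> r)"
      unfolding horocycle_iff_height[OF r'] horocycle_iff_height[OF r] horoball_iff_height[OF r']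
        horoball_iff_height[OF r] height[OF z] level
      using z Im_mob_pos[OF z A] k by auto
  qed
qed

lemma horocycle_Some_iff_inf_to:
  assumes "\<rho> > 0"
  shows "z \<in> horocycle (Some y) \<rho> \<longleftrightarrow> Im z > 0 \<and> Im (mob (adj2 (inf_to y)) z) = 1 / (2*\<rho>)"
  using horocycle_iff_height[OF assms, of z "Some y"] by (simp add: horo_height_def to_inf_def)

lemma arclen_param_mob:
  assumes A: "det A = 1" and H: "arclen_param H C" and C: "\<forall>z\<in>C. Im z > 0"
  shows "arclen_param (\<lambda>s. mob A (H s)) (mob A ` C)"
  unfolding arclen_param_def
proof (intro conjI allI)
  have "inj_on (mob A) C" using mob_adj2_mob[OF A] C by (metis inj_on_inverseI)
  then have "bij_betw (mob A \<circ> H) UNIV (mob A ` C)"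
    using H bij_betw_trans[of H UNIV C "mob A" "mob A ` C"] unfolding arclen_param_def
    by (simp add: bij_betw_imageI)
  then show "bij_betw (\<lambda>s. mob A (H s)) UNIV (mob A ` C)" by (simp add: comp_def)
  fix s
  obtain v where v: "(H has_vector_derivative v) (at s)" "cmod v = Im (H s)"
    using H unfolding arclen_param_def by blast
  have I: "Im (H s) > 0" using H C unfolding arclen_param_def bij_betw_def by blast
  then have d: "mob_den A (H s) \<noteq> 0" using mob_den_nonzero[of A "H s"] A by simp
  have "((mob A \<circ> H) has_vector_derivative (v * (1 / (mob_den A (H s))\<^sup>2))) (at s)"
    using field_vector_diff_chain_at[OF v(1) mob_has_field_derivative[OF A d]] .
  moreover have "cmod (v * (1 / (mob_den A (H s))\<^sup>2)) = Im (mob A (H s))"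
    using Im_mob[OF I] A v(2) by (simp add: norm_mult norm_divide norm_power)
  ultimately show "\<exists>v. ((\<lambda>s. mob A (H s)) has_vector_derivative v) (at s) \<and> cmod v = Im (mob A (H s))"
    by (auto simp: comp_def)
qed

lemma norm_diff_le_speed_bound:
  fixes f :: "real \<Rightarrow> complex"
  assumes ab: "a < b" and d: "\<And>s. (f has_vector_derivative v s) (at s)" and B: "\<And>s. cmod (v s) \<le> B"
  shows "cmod (f b - f a) \<le> B * (b - a)"
proof -
  have "continuous_on {a..b} f"
    using d by (intro continuous_at_imp_continuous_on ballI has_vector_derivative_continuous) auto
  then obtain x where "norm (f b - f a) \<le> norm ((b - a) *\<^sub>R v x)"
    using mvt_general[OF ab, of f "\<lambda>x t. t *\<^sub>R v x"] d unfolding has_vector_derivative_def by blast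
  also have "\<dots> = (b - a) * cmod (v x)" using ab by simp
  also have "\<dots> \<le> (b - a) * B" using B ab by (simp add: mult_left_mono)
  finally show ?thesis by (simp add: mult.commute)
qed

lemma horizontal_arclen_param:
  fixes a :: real
  assumes h: "h > 0" and t: "\<tau> \<noteq> 0"
  defines "w \<equiv> \<lambda>s. Complex (a + sgn \<tau> * h * s) h"
  shows "arclen_param w {z. Im z = h}"
    and "\<And>s. w s + of_real \<tau> = w (s + \<bar>\<tau>\<bar> / h)"
    and "\<And>s. (w has_vector_derivative of_real (sgn \<tau> * h)) (at s)"
proof -
  show der: "(w has_vector_derivative of_real (sgn \<tau> * h)) (at s)" for s
  proof -
    have "((\<lambda>s. of_real (a + sgn \<tau> * h * s) + \<i> * of_real h) has_vector_derivative of_real (sgn \<tau> * h)) (at s)"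
      unfolding has_vector_derivative_def
      by (rule derivative_eq_intros refl | simp add: scaleR_conv_of_real fun_eq_iff)+
    moreover have "(\<lambda>s. of_real (a + sgn \<tau> * h * s) + \<i> * of_real h) = w"
      unfolding w_def by (auto simp: complex_eq_iff)
    ultimately show ?thesis by simp
  qed
  show "arclen_param w {z. Im z = h}" unfolding arclen_param_def
  proof (intro conjI allI exI)
    show "bij_betw w UNIV {z. Im z = h}"
      by (rule bij_betw_byWitness[of _ "\<lambda>z. (Re z - a) / (sgn \<tau> * h)"])
        (use h t in \<open>auto simp: w_def sgn_if complex_eq_iff\<close>)
    show "(w has_vector_derivative of_real (sgn \<tau> * h)) (at s)" for s by (rule der)
    show "cmod (of_real (sgn \<tau> * h)) = Im (w s)" for s
      using h t unfolding norm_of_real by (simp add: w_def abs_mult sgn_if del: of_real_mult)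
  qed
  show "w s + of_real \<tau> = w (s + \<bar>\<tau>\<bar> / h)" for s
    using h t by (simp add: w_def complex_eq_iff algebra_simps sgn_if)
qed

lemma mob_inf_to_horizontal:
  assumes "\<rho> > 0"
  shows "mob (inf_to y) ` {z. Im z = 1/(2*\<rho>)} = horocycle (Some y) \<rho>"
proof
  show "mob (inf_to y) ` {z. Im z = 1/(2*\<rho>)} \<subseteq> horocycle (Some y) \<rho>"
  proof
    fix z assume "z \<in> mob (inf_to y) ` {z. Im z = 1/(2*\<rho>)}"
    then obtain w where w: "Im w = 1/(2*\<rho>)" "z = mob (inf_to y) w" by auto
    then have "Im w > 0" using assms by simp
    then show "z \<in> horocycle (Some y) \<rho>" unfolding horocycle_Some_iff_inf_to[OF assms] w(2)
      using Im_mob_pos[OF _ det_inf_to] mob_adj2_mob[OF det_inf_to] w(1) by simp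
  qed
  show "horocycle (Some y) \<rho> \<subseteq> mob (inf_to y) ` {z. Im z = 1/(2*\<rho>)}"
  proof
    fix z assume "z \<in> horocycle (Some y) \<rho>"
    then have "Im z > 0" and "Im (mob (adj2 (inf_to y)) z) = 1/(2*\<rho>)"
      using horocycle_Some_iff_inf_to[OF assms] by auto
    moreover from \<open>Im z > 0\<close> have "z = mob (inf_to y) (mob (adj2 (inf_to y)) z)"
      using mob_mob_adj2[OF det_inf_to] by simp
    ultimately show "z \<in> mob (inf_to y) ` {z. Im z = 1/(2*\<rho>)}" by blast
  qed
qed

lemma adj2_parab_mat: "adj2 (parab_mat e k y) = parab_mat e (-k) y"
  by (simp add: parab_mat_def mat2_eq_iff)

lemma mob_parab_mat_inf_to:
  assumes e: "e*e = 1" and w: "Im w > 0"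
  shows "mob (parab_mat e k y) (mob (inf_to y) w) = mob (inf_to y) (w + of_real k)"
proof -
  have "parab_mat e k y = inf_to y ** mat2_of e (e*k) 0 e ** adj2 (inf_to y)"
    using conj_conj_cancel[of "inf_to y" "parab_mat e k y"] parab_mat_conj_inf_to_same by simp
  moreover have "det (mat2_of e (e*k) 0 e) = 1" using e by (simp add: det_2)
  moreover have "e \<noteq> 0" using e by auto
  ultimately show ?thesis using mob_conj[OF det_inf_to _ w] mob_translation by simp
qed

lemma parab_mat_translation_length_ge:
  assumes r: "\<rho> > 0" and e: "e*e = 1" and l: "l > 0"
    and K: "arclen_param K (horocycle (Some y) \<rho>)"
    and shift: "\<And>s. mob (parab_mat e k y) (K s) = K (s + l)"
  shows "2*\<rho>*\<bar>k\<bar> \<le> l"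
proof -
  define Ai where "Ai = adj2 (inf_to y)"
  define K' where "K' = (\<lambda>s. mob Ai (K s))"
  have KH: "K s \<in> horocycle (Some y) \<rho>" for s using K unfolding arclen_param_def bij_betw_def by blast
  then have KI: "Im (K s) > 0" for s using horocycle_Im_pos[OF r] by blast
  have height: "Im (K' s) = 1/(2*\<rho>)" for s
    using horocycle_Some_iff_inf_to[OF r] KH[of s] unfolding K'_def Ai_def by blast
  have "arclen_param K' (mob Ai ` horocycle (Some y) \<rho>)"
    unfolding K'_def Ai_def by (rule arclen_param_mob[OF det_adj2[THEN trans, OF det_inf_to] K]) (use horocycle_Im_pos[OF r] in blast)
  then obtain v where v: "\<And>s. (K' has_vector_derivative v s) (at s) \<and> cmod (v s) = Im (K' s)"
    unfolding arclen_param_def by metis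
  have "cmod (K' l - K' 0) \<le> (1/(2*\<rho>)) * (l - 0)"
    by (rule norm_diff_le_speed_bound[OF l]) (use v height in auto)
  moreover have "K' l = K' 0 + of_real k"
  proof -
    have wI: "Im (K' 0) > 0" unfolding K'_def Ai_def using Im_mob_pos[OF KI] by simp
    have "K 0 = mob (inf_to y) (K' 0)" unfolding K'_def Ai_def using mob_mob_adj2[OF det_inf_to KI] by simp
    then have "K l = mob (inf_to y) (K' 0 + of_real k)"
      using shift[of 0] mob_parab_mat_inf_to[OF e wI] by simp
    moreover have "Im (K' 0 + of_real k) > 0" using wI by simp
    ultimately have "mob Ai (K l) = K' 0 + of_real k"
      unfolding Ai_def using mob_adj2_mob[OF det_inf_to] by simp
    then show ?thesis by (simp add: K'_def)
  qed
  ultimately have "\<bar>k\<bar> \<le> l / (2*\<rho>)" by simp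
  then show ?thesis using r by (simp add: field_simps)
qed

lemma parabolic_horocycle_param:
  assumes d: "det p = 1" and pp: "parabolic p" and f: "bd_act p \<xi> = \<xi>" and r: "r > 0"
  obtains l H where "l > 0" "arclen_param H (horocycle \<xi> r)" "\<And>s. mob p (H s) = H (s + l)"
proof (cases \<xi>)
  case None
  obtain e \<tau> where e: "e*e = 1" "\<tau> \<noteq> 0" "p = mat2_of e (e*\<tau>) 0 e"
    using parabolic_fixing_inf[OF d pp] f None by auto
  have "e \<noteq> 0" using e by auto
  then show thesis
    using that[of "\<bar>\<tau>\<bar>/r" "\<lambda>s. Complex (0 + sgn \<tau> * r * s) r"] horizontal_arclen_param[OF r e(2), where a=0]
      mob_translation e None r by simp
next
  case (Some y)
  obtain e k where e: "e = 1 \<or> e = -1" "k \<noteq> 0" "p = parab_mat e k y"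
    using parabolic_fixing_real[OF d pp] f Some by blast
  define h where "h = 1/(2*r)"
  have h: "h > 0" using r h_def by simp
  define w where "w = (\<lambda>s. Complex (0 + sgn k * h * s) h)"
  have "arclen_param (\<lambda>s. mob (inf_to y) (w s)) (horocycle \<xi> r)"
    using arclen_param_mob[OF det_inf_to[of y] horizontal_arclen_param(1)[OF h e(2), where a=0]] h
      mob_inf_to_horizontal[OF r, of y] Some unfolding w_def h_def by simp
  moreover have "mob p (mob (inf_to y) (w s)) = mob (inf_to y) (w (s + \<bar>k\<bar>/h))" for s
    using mob_parab_mat_inf_to[of e "w s" k y] horizontal_arclen_param(2)[OF h e(2), where a=0] e h
    unfolding w_def by auto
  moreover have "\<bar>k\<bar>/h > 0" using e h by simp
  ultimately show thesis using that by blast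
qed

lemma tangent_horocycle_param:
  assumes y: "y \<noteq> 0" and e: "e*e = 1" and k: "k \<noteq> 0"
  obtains K \<tau> where "arclen_param K (horocycle (Some y) \<bar>y\<bar>)" "K 0 = \<i> * of_real \<bar>y\<bar>"
    "(K has_vector_derivative \<i> * of_real \<bar>y\<bar>) (at 0)" "\<tau> = k \<or> \<tau> = -k"
    "\<And>s. mob (parab_mat e \<tau> y) (K s) = K (s + 2*\<bar>y\<bar>*\<bar>k\<bar>)"
proof -
  define \<tau> where "\<tau> = - sgn y * \<bar>k\<bar>"
  have t0: "\<tau> \<noteq> 0" using y k by (simp add: \<tau>_def sgn_if)
  have sgn_\<tau>: "sgn \<tau> = - sgn y" using k by (simp add: \<tau>_def sgn_mult)
  have abs_\<tau>: "\<bar>\<tau>\<bar> = \<bar>k\<bar>" using y by (simp add: \<tau>_def abs_mult)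
  then have \<tau>: "\<tau> = k \<or> \<tau> = -k" by (auto simp: abs_if split: if_splits)
  define h where "h = 1/(2*\<bar>y\<bar>)"
  have h: "h > 0" using y h_def by simp
  define w where "w = (\<lambda>s. Complex (1/(2*y) + sgn \<tau> * h * s) h)"
  have wI: "Im (w s) > 0" for s using h unfolding w_def by simp
  define K where "K = (\<lambda>s. mob (inf_to y) (w s))"
  have "arclen_param K (horocycle (Some y) \<bar>y\<bar>)"
    using arclen_param_mob[OF det_inf_to[of y] horizontal_arclen_param(1)[OF h t0, where a="1/(2*y)"]] mob_inf_to_horizontal[of "\<bar>y\<bar>" y] y
    unfolding h_def K_def w_def by simp
  moreover
  have w0: "w 0 \<noteq> 0" "mob_den (inf_to y) (w 0) = w 0" using y by (simp_all add: w_def complex_eq_iff mob_den_def inf_to_def)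
  have "of_real y * w 0 - 1 = \<i> * of_real \<bar>y\<bar> * w 0"
    using y by (cases "y > 0") (auto simp: w_def h_def complex_eq_iff field_simps)
  then have "K 0 = \<i> * of_real \<bar>y\<bar>"
    using w0 by (simp add: K_def mob_def inf_to_def divide_eq_eq)
  moreover
  have "of_real (sgn \<tau> * h) = (\<i> * of_real \<bar>y\<bar>) * (w 0)\<^sup>2"
    using y unfolding sgn_\<tau> by (cases "y > 0") (auto simp: w_def h_def complex_eq_iff field_simps power2_eq_square)
  then have "of_real (sgn \<tau> * h) * (1 / (mob_den (inf_to y) (w 0))\<^sup>2) = \<i> * of_real \<bar>y\<bar>"
    using w0 by (simp add: field_simps power2_eq_square del: of_real_mult)
  moreover have "((mob (inf_to y) \<circ> w) has_vector_derivative
      (of_real (sgn \<tau> * h) * (1 / (mob_den (inf_to y) (w 0))\<^sup>2))) (at 0)"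
    using horizontal_arclen_param(3)[OF h t0, of "1/(2*y)" 0] w0
      mob_has_field_derivative[OF det_inf_to, of y "w 0"] unfolding w_def
    by (intro field_vector_diff_chain_at) simp_all
  moreover have "mob (parab_mat e \<tau> y) (K s) = K (s + 2*\<bar>y\<bar>*\<bar>k\<bar>)" for s
  proof -
    have "mob (parab_mat e \<tau> y) (K s) = mob (inf_to y) (w s + of_real \<tau>)"
      unfolding K_def using mob_parab_mat_inf_to[OF e wI] .
    also have "\<dots> = K (s + \<bar>\<tau>\<bar>/h)" using horizontal_arclen_param(2)[OF h t0] unfolding K_def w_def by simp
    finally show ?thesis unfolding abs_\<tau> h_def by (simp add: mult.commute)
  qed
  ultimately show thesis using that[of K \<tau>] \<tau> unfolding K_def comp_def by simp
qed

section \<open>Geodesics\<close>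

text \<open>Coordinates of the hyperboloid model: \<open>cosh (hdist z w)\<close> is the Minkowski product of the images of \<open>z\<close> and \<open>w\<close>.\<close>

definition hyp0 :: "complex \<Rightarrow> real" where
  "hyp0 z = ((Re z)\<^sup>2 + (Im z)\<^sup>2 + 1) / (2 * Im z)"

definition hyp1 :: "complex \<Rightarrow> real" where
  "hyp1 z = ((Re z)\<^sup>2 + (Im z)\<^sup>2 - 1) / (2 * Im z)"

definition hyp2 :: "complex \<Rightarrow> real" where
  "hyp2 z = Re z / Im z"

lemma cosh_hdist_hyp:
  assumes "Im z > 0" "Im w > 0"
  shows "cosh (hdist z w) = hyp0 z * hyp0 w - hyp1 z * hyp1 w - hyp2 z * hyp2 w"
proof -
  have "cosh (hdist z w) = 1 + (cmod (z - w))\<^sup>2 / (2 * Im z * Im w)"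
    unfolding hdist_def using assms by simp
  also have "\<dots> = hyp0 z * hyp0 w - hyp1 z * hyp1 w - hyp2 z * hyp2 w"
    using assms unfolding hyp0_def hyp1_def hyp2_def cmod_power2
    by (simp add: field_simps power2_eq_square)
  finally show ?thesis .
qed

lemma hyp_i: "hyp0 \<i> = 1" "hyp1 \<i> = 0" "hyp2 \<i> = 0"
  by (simp_all add: hyp0_def hyp1_def hyp2_def)

lemma cosh_abs_real: "cosh \<bar>x::real\<bar> = cosh x"
  by (cases "x \<ge> 0") auto

lemma hyp_geodesic_through_i:
  fixes \<delta> :: "real \<Rightarrow> complex"
  assumes d0: "\<delta> 0 = \<i>" and dI: "\<And>s. Im (\<delta> s) > 0" and dh: "\<And>s t. hdist (\<delta> s) (\<delta> t) = \<bar>s - t\<bar>"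
  obtains E1 E2 where "\<And>s. hyp0 (\<delta> s) = cosh s" "\<And>s. hyp1 (\<delta> s) = sinh s * E1" "\<And>s. hyp2 (\<delta> s) = sinh s * E2"
proof -
  have ch: "cosh (s - t) = hyp0 (\<delta> s) * hyp0 (\<delta> t) - hyp1 (\<delta> s) * hyp1 (\<delta> t) - hyp2 (\<delta> s) * hyp2 (\<delta> t)" for s t
    using cosh_hdist_hyp[OF dI dI, of s t] dh[of s t] cosh_abs_real by simp
  have X: "hyp0 (\<delta> s) = cosh s" for s using ch[of s 0] d0 hyp_i by simp
  have dot: "hyp1 (\<delta> s) * hyp1 (\<delta> t) + hyp2 (\<delta> s) * hyp2 (\<delta> t) = sinh s * sinh t" for s t
    using ch[of s t] X[of s] X[of t] cosh_diff[of s t] by simp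
  \<comment> \<open>Equality in Cauchy-Schwarz: the spatial parts of all points are proportional.\<close>
  have par: "hyp1 (\<delta> s) * sinh t = hyp1 (\<delta> t) * sinh s \<and> hyp2 (\<delta> s) * sinh t = hyp2 (\<delta> t) * sinh s" for s t
  proof -
    have "(hyp1 (\<delta> s) * sinh t - hyp1 (\<delta> t) * sinh s)\<^sup>2 + (hyp2 (\<delta> s) * sinh t - hyp2 (\<delta> t) * sinh s)\<^sup>2 =
       (hyp1 (\<delta> s) * hyp1 (\<delta> s) + hyp2 (\<delta> s) * hyp2 (\<delta> s)) * (sinh t)\<^sup>2
       - 2 * (hyp1 (\<delta> s) * hyp1 (\<delta> t) + hyp2 (\<delta> s) * hyp2 (\<delta> t)) * sinh s * sinh t
       + (hyp1 (\<delta> t) * hyp1 (\<delta> t) + hyp2 (\<delta> t) * hyp2 (\<delta> t)) * (sinh s)\<^sup>2"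
      by (simp add: power2_eq_square algebra_simps)
    also have "\<dots> = 0" unfolding dot by (simp add: power2_eq_square algebra_simps)
    finally show ?thesis by (simp add: add_nonneg_eq_0_iff)
  qed
  have "sinh (1::real) \<noteq> 0" by simp
  then show thesis
    using that[of "hyp1 (\<delta> 1) / sinh 1" "hyp2 (\<delta> 1) / sinh 1"] X par[of _ 1] by (simp add: field_simps)
qed

lemma standard_geodesic_unique:
  fixes \<delta> :: "real \<Rightarrow> complex"
  assumes d0: "\<delta> 0 = \<i>" and dd: "(\<delta> has_vector_derivative \<i>) (at 0)"
    and dI: "\<And>s. Im (\<delta> s) > 0" and dh: "\<And>s t. hdist (\<delta> s) (\<delta> t) = \<bar>s - t\<bar>"
  shows "\<delta> s = \<i> * of_real (exp s)"
proof -
  obtain E1 E2 where X: "\<And>s. hyp0 (\<delta> s) = cosh s"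
    and V1: "\<And>s. hyp1 (\<delta> s) = sinh s * E1" and V2: "\<And>s. hyp2 (\<delta> s) = sinh s * E2"
    using hyp_geodesic_through_i[OF d0 dI dh] by blast
  have R0: "Re (\<delta> 0) = 0" and I0: "Im (\<delta> 0) = 1" using d0 by simp_all
  have dRe: "((\<lambda>s. Re (\<delta> s)) has_real_derivative 0) (at 0)" using has_field_derivative_Re[OF dd] by simp
  have dIm: "((\<lambda>s. Im (\<delta> s)) has_real_derivative 1) (at 0)" using has_field_derivative_Im[OF dd] by simp
  have "((\<lambda>s. ((Re (\<delta> s))\<^sup>2 + (Im (\<delta> s))\<^sup>2 - 1) / (2 * Im (\<delta> s))) has_real_derivative
     ((2 * Re (\<delta> 0) * 0 + 2 * Im (\<delta> 0) * 1 - 0) * (2 * Im (\<delta> 0)) - ((Re (\<delta> 0))\<^sup>2 + (Im (\<delta> 0))\<^sup>2 - 1) * (2 * 1))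
      / ((2 * Im (\<delta> 0)) * (2 * Im (\<delta> 0)))) (at 0)"
    by (rule derivative_eq_intros dRe dIm refl | simp add: I0)+
  then have "((\<lambda>s. hyp1 (\<delta> s)) has_real_derivative 1) (at 0)" unfolding hyp1_def R0 I0 by simp
  moreover have "((\<lambda>s. hyp1 (\<delta> s)) has_real_derivative E1) (at 0)"
    unfolding V1 by (auto intro!: derivative_eq_intros)
  ultimately have E1: "E1 = 1" using DERIV_unique by blast
  have "((\<lambda>s. Re (\<delta> s) / Im (\<delta> s)) has_real_derivative
     (0 * Im (\<delta> 0) - Re (\<delta> 0) * 1) / (Im (\<delta> 0) * Im (\<delta> 0))) (at 0)"
    by (rule derivative_eq_intros dRe dIm refl | simp add: I0)+
  then have "((\<lambda>s. hyp2 (\<delta> s)) has_real_derivative 0) (at 0)" unfolding hyp2_def R0 I0 by simp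
  moreover have "((\<lambda>s. hyp2 (\<delta> s)) has_real_derivative E2) (at 0)"
    unfolding V2 by (auto intro!: derivative_eq_intros)
  ultimately have E2: "E2 = 0" using DERIV_unique by blast
  have re: "Re (\<delta> s) = 0" using V2[of s] E2 dI[of s] unfolding hyp2_def by simp
  have "hyp0 (\<delta> s) + hyp1 (\<delta> s) = Im (\<delta> s)"
    using dI[of s] re unfolding hyp0_def hyp1_def by (simp add: field_simps power2_eq_square)
  then have "Im (\<delta> s) = exp s" using X[of s] V1[of s] E1 by (simp add: cosh_plus_sinh)
  then show ?thesis using re by (simp add: complex_eq_iff)
qed

lemma hdist_imag_exp: "hdist (\<i> * of_real (exp s)) (\<i> * of_real (exp t)) = \<bar>s - t\<bar>"
proof -
  have "1 + (cmod (\<i> * of_real (exp s) - \<i> * of_real (exp t)))\<^sup>2 / (2 * Im (\<i> * of_real (exp s)) * Im (\<i> * of_real (exp t)))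
      = 1 + (exp s - exp t)\<^sup>2 / (2 * exp s * exp t)"
    by (simp add: cmod_power2)
  also have "\<dots> = (exp s / exp t + exp t / exp s) / 2"
    by (simp add: field_simps power2_eq_square)
  also have "\<dots> = cosh (s - t)" by (simp add: cosh_def exp_diff)
  finally have "hdist (\<i> * of_real (exp s)) (\<i> * of_real (exp t)) = arcosh (cosh (s - t))"
    unfolding hdist_def by simp
  then show ?thesis using arcosh_cosh_real[of "\<bar>s - t\<bar>"] cosh_abs_real[of "s - t"] by simp
qed

lemma imag_exp_has_vector_derivative:
  "((\<lambda>s. \<i> * of_real (exp s)) has_vector_derivative \<i> * of_real (exp t)) (at t)"
  unfolding has_vector_derivative_def
  by (rule derivative_eq_intros refl | simp add: scaleR_conv_of_real fun_eq_iff)+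

text \<open>\<open>frame_mat u\<close> maps the unit vector \<open>(\<i>, \<i>)\<close> to \<open>u = (z, v)\<close>: the denominator \<open>c \<i> + d\<close> is a square root
  \<open>\<omega>\<close> of \<open>\<i> / v\<close>, so that the derivative \<open>1 / \<omega>\<^sup>2\<close> at \<open>\<i>\<close> turns \<open>\<i>\<close> into \<open>v\<close>.\<close>

definition frame_mat :: "complex \<times> complex \<Rightarrow> mat2" where
  "frame_mat u = (let \<omega> = csqrt (\<i> / snd u); c = Im \<omega>; d = Re \<omega>; x = Re (fst u); y = Im (fst u)
                  in mat2_of (y*d + x*c) (x*d - y*c) c d)"

lemma frame_mat:
  assumes u: "u \<in> T1H"
  shows "det (frame_mat u) = 1" and "mob (frame_mat u) \<i> = fst u"
    and "snd u * (mob_den (frame_mat u) \<i>)\<^sup>2 = \<i>" and "mob_den (frame_mat u) \<i> \<noteq> 0"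
proof -
  obtain z v where uz: "u = (z, v)" by (cases u)
  have zI: "Im z > 0" and vz: "cmod v = Im z" using u uz unfolding T1H_def by auto
  define \<omega> where "\<omega> = csqrt (\<i> / v)"
  have w2: "\<omega>\<^sup>2 = \<i> / v" unfolding \<omega>_def by simp
  have g: "frame_mat u = mat2_of (Im z * Re \<omega> + Re z * Im \<omega>) (Re z * Re \<omega> - Im z * Im \<omega>) (Im \<omega>) (Re \<omega>)"
    unfolding frame_mat_def uz \<omega>_def by (simp add: Let_def)
  have "(cmod \<omega>)\<^sup>2 = 1 / Im z"
    using vz by (simp add: norm_power[symmetric] w2 norm_divide)
  moreover have "det (frame_mat u) = Im z * (cmod \<omega>)\<^sup>2"
    unfolding g det_2 cmod_power2 by (simp add: power2_eq_square algebra_simps)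
  ultimately show "det (frame_mat u) = 1" using zI by simp
  have dw: "mob_den (frame_mat u) \<i> = \<omega>" unfolding g mob_den_def by (simp add: complex_eq_iff)
  have "v \<noteq> 0" using zI vz by auto
  then have w0: "\<omega> \<noteq> 0" using w2 by auto
  then show "mob_den (frame_mat u) \<i> \<noteq> 0" using dw by simp
  have "of_real (Im z * Re \<omega> + Re z * Im \<omega>) * \<i> + of_real (Re z * Re \<omega> - Im z * Im \<omega>) = z * \<omega>"
    by (simp add: complex_eq_iff)
  then show "mob (frame_mat u) \<i> = fst u" unfolding mob_eq_div_den dw using w0 uz g by simp
  show "snd u * (mob_den (frame_mat u) \<i>)\<^sup>2 = \<i>" unfolding dw w2 using uz \<open>v \<noteq> 0\<close> by simp
qed

lemma mob_den_adj2_mob: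
  assumes "det g = 1" "mob_den g w \<noteq> 0"
  shows "mob_den (adj2 g) (mob g w) = 1 / mob_den g w"
proof -
  have "mob_den (adj2 g) (mob g w)
      = (- of_real (g$2$1) * (of_real (g$1$1) * w + of_real (g$1$2)) + of_real (g$1$1) * mob_den g w) / mob_den g w"
    unfolding mob_den_def mob_eq_div_den using assms(2) by (simp add: field_simps mob_den_def)
  also have "- of_real (g$2$1) * (of_real (g$1$1) * w + of_real (g$1$2)) + of_real (g$1$1) * mob_den g w = (1::complex)"
    unfolding mob_den_def using of_real_det_1[OF assms(1)] by (simp add: algebra_simps)
  finally show ?thesis .
qed

lemma geod_eq_frame_mat:
  assumes u: "u \<in> T1H"
  shows "geod u = (\<lambda>s. mob (frame_mat u) (\<i> * of_real (exp s)))"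
proof -
  define g where "g = frame_mat u"
  note gp = frame_mat[OF u, folded g_def]
  define P where "P \<gamma> \<longleftrightarrow> \<gamma> 0 = fst u \<and> (\<gamma> has_vector_derivative snd u) (at 0) \<and>
                     (\<forall>s. Im (\<gamma> s) > 0) \<and> (\<forall>s t. hdist (\<gamma> s) (\<gamma> t) = \<bar>s - t\<bar>)" for \<gamma>
  define \<gamma> where "\<gamma> = (\<lambda>s. mob g (\<i> * of_real (exp s)))"
  have vI: "Im (\<i> * of_real (exp s)) > 0" for s by simp
  have "P \<gamma>" unfolding P_def
  proof (intro conjI allI)
    show "\<gamma> 0 = fst u" unfolding \<gamma>_def using gp(2) by simp
    have "(mob g has_field_derivative 1 / (mob_den g \<i>)\<^sup>2) (at ((\<lambda>s. \<i> * of_real (exp s)) 0))"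
      using mob_has_field_derivative[OF gp(1) gp(4)] by simp
    from field_vector_diff_chain_at[OF imag_exp_has_vector_derivative this]
    have "((mob g \<circ> (\<lambda>s. \<i> * of_real (exp s))) has_vector_derivative \<i> * (1 / (mob_den g \<i>)\<^sup>2)) (at 0)"
      by simp
    moreover have "\<i> * (1 / (mob_den g \<i>)\<^sup>2) = snd u" using gp(3) gp(4) by (simp add: field_simps)
    ultimately show "(\<gamma> has_vector_derivative snd u) (at 0)" unfolding \<gamma>_def comp_def by simp
    show "Im (\<gamma> s) > 0" for s unfolding \<gamma>_def using Im_mob_pos[OF vI gp(1)] .
    show "hdist (\<gamma> s) (\<gamma> t) = \<bar>s - t\<bar>" for s t
      unfolding \<gamma>_def using hdist_mob[OF gp(1) vI vI] hdist_imag_exp by simp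
  qed
  moreover have "\<delta> = \<gamma>" if "P \<delta>" for \<delta>
  proof
    fix s
    define \<delta>' where "\<delta>' = (\<lambda>s. mob (adj2 g) (\<delta> s))"
    have dg: "det (adj2 g) = 1" using gp(1) by simp
    have d0: "\<delta> 0 = mob g \<i>" using that gp(2) unfolding P_def by simp
    have dn: "mob_den (adj2 g) (\<delta> 0) = 1 / mob_den g \<i>"
      unfolding d0 using mob_den_adj2_mob[OF gp(1) gp(4)] .
    have "((mob (adj2 g) \<circ> \<delta>) has_vector_derivative snd u * (1 / (mob_den (adj2 g) (\<delta> 0))\<^sup>2)) (at 0)"
      using that dn gp(4) unfolding P_def
      by (intro field_vector_diff_chain_at mob_has_field_derivative[OF dg]) auto
    moreover have "snd u * (1 / (mob_den (adj2 g) (\<delta> 0))\<^sup>2) = \<i>"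
      unfolding dn using gp(3) gp(4) by (simp add: field_simps)
    ultimately have "(\<delta>' has_vector_derivative \<i>) (at 0)" unfolding \<delta>'_def comp_def by simp
    moreover have "\<delta>' 0 = \<i>" unfolding \<delta>'_def d0 using mob_adj2_mob[OF gp(1)] by simp
    moreover have "Im (\<delta>' s) > 0" for s unfolding \<delta>'_def using Im_mob_pos[OF _ dg] that unfolding P_def by blast
    moreover have "hdist (\<delta>' s) (\<delta>' t) = \<bar>s - t\<bar>" for s t
      unfolding \<delta>'_def using hdist_mob[OF dg] that unfolding P_def by simp
    ultimately have "\<delta>' s = \<i> * of_real (exp s)" using standard_geodesic_unique[of \<delta>' s] by blast
    moreover have "mob g (\<delta>' s) = \<delta> s" unfolding \<delta>'_def using mob_mob_adj2[OF gp(1)] that unfolding P_def by blast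
    ultimately show "\<delta> s = \<gamma> s" unfolding \<gamma>_def by simp
  qed
  ultimately have "geod u = \<gamma>" unfolding geod_def P_def[symmetric] by (rule the_equality)
  then show ?thesis unfolding \<gamma>_def g_def .
qed

lemma tends_to_bd_unique:
  assumes "tends_to_bd \<gamma> \<xi>1" "tends_to_bd \<gamma> \<xi>2"
  shows "\<xi>1 = \<xi>2"
proof -
  have False if "filterlim (\<lambda>t. cmod (\<gamma> t)) at_top at_top" "(\<gamma> \<longlongrightarrow> complex_of_real x) at_top" for x
    using not_tendsto_and_filterlim_at_infinity[OF _ tendsto_norm[OF that(2)] filterlim_at_top_imp_at_infinity[OF that(1)]]
    by simp
  moreover have "x1 = x2" if "(\<gamma> \<longlongrightarrow> complex_of_real x1) at_top" "(\<gamma> \<longlongrightarrow> complex_of_real x2) at_top" for x1 x2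
    using tendsto_unique[OF trivial_limit_at_top_linorder that] by simp
  ultimately show ?thesis
    using assms unfolding tends_to_bd_def by (cases \<xi>1; cases \<xi>2) auto
qed

lemma tends_to_bd_mob_imag_exp:
  assumes g: "det g = 1"
  shows "tends_to_bd (\<lambda>t. mob g (\<i> * of_real (exp t))) (bd_act g None)"
proof (cases "g$2$1 = 0")
  case True
  then have d0: "g$2$2 \<noteq> 0" using g by (auto simp: det_2)
  have bound: "1 / (g$2$2)\<^sup>2 * exp t \<le> cmod (mob g (\<i> * of_real (exp t)))" for t
  proof -
    have "1 / (g$2$2)\<^sup>2 * exp t = Im (mob g (\<i> * of_real (exp t)))"
      using Im_mob_fixing_inf[OF g True, of "\<i> * of_real (exp t)"] by simp
    then show ?thesis using abs_Im_le_cmod[of "mob g (\<i> * of_real (exp t))"] by linarith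
  qed
  have "filterlim (\<lambda>t. 1 / (g$2$2)\<^sup>2 * exp t) at_top at_top"
    by (rule filterlim_tendsto_pos_mult_at_top[OF tendsto_const _ exp_at_top]) (use d0 in simp)
  then have "filterlim (\<lambda>t. cmod (mob g (\<i> * of_real (exp t)))) at_top at_top"
    by (rule filterlim_at_top_mono) (use bound in \<open>simp add: always_eventually\<close>)
  then show ?thesis using True unfolding tends_to_bd_def by simp
next
  case False
  let ?a = "complex_of_real (g$1$1)" and ?b = "complex_of_real (g$1$2)"
  let ?c = "complex_of_real (g$2$1)" and ?d = "complex_of_real (g$2$2)"
  have eq: "mob g (\<i> * of_real (exp t)) = (?a * \<i> + ?b * of_real (exp (-t))) / (?c * \<i> + ?d * of_real (exp (-t)))" for t
  proof -
    define E where "E = complex_of_real (exp t)"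
    have E: "E \<noteq> 0" unfolding E_def by simp
    have ex: "complex_of_real (exp (-t)) = 1 / E"
      unfolding E_def by (simp add: exp_minus of_real_inverse divide_inverse)
    have "mob g (\<i> * of_real (exp t)) = ((?a * (\<i> * E) + ?b) / E) / ((?c * (\<i> * E) + ?d) / E)"
      unfolding mob_def E_def by simp
    also have "(?a * (\<i> * E) + ?b) / E = ?a * \<i> + ?b * of_real (exp (-t))"
      unfolding ex using E by (simp add: field_simps)
    also have "(?c * (\<i> * E) + ?d) / E = ?c * \<i> + ?d * of_real (exp (-t))"
      unfolding ex using E by (simp add: field_simps)
    finally show ?thesis .
  qed
  have "((\<lambda>t. complex_of_real (exp (- t))) \<longlongrightarrow> 0) at_top"
    using tendsto_of_real[OF filterlim_compose[OF exp_at_bot filterlim_uminus_at_bot_at_top]] by simp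
  then have "((\<lambda>t. (?a * \<i> + ?b * of_real (exp (-t))) / (?c * \<i> + ?d * of_real (exp (-t)))) \<longlongrightarrow>
      (?a * \<i> + ?b * 0) / (?c * \<i> + ?d * 0)) at_top"
    by (intro tendsto_intros) (use False in simp_all)
  moreover have "(?a * \<i> + ?b * 0) / (?c * \<i> + ?d * 0) = complex_of_real (g$1$1 / g$2$1)" using False by simp
  ultimately show ?thesis using False unfolding tends_to_bd_def eq by simp
qed

lemma fwd_end_eq_frame_mat:
  assumes u: "u \<in> T1H"
  shows "fwd_end u = bd_act (frame_mat u) None"
  unfolding fwd_end_def geod_eq_frame_mat[OF u]
  using tends_to_bd_mob_imag_exp[OF frame_mat(1)[OF u]] tends_to_bd_unique by blast

section \<open>Discreteness and Shimizu's lemma\<close>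

definition norm1 :: "mat2 \<Rightarrow> real" where
  "norm1 M = \<bar>M$1$1\<bar> + \<bar>M$1$2\<bar> + \<bar>M$2$1\<bar> + \<bar>M$2$2\<bar>"

lemma norm_le_norm1: "norm (M::mat2) \<le> norm1 M"
proof -
  have "norm M \<le> (\<Sum>i\<in>UNIV. norm (M$i))" unfolding norm_vec_def by (rule L2_set_le_sum) simp
  also have "\<dots> = norm (M$1) + norm (M$2)" by (simp add: sum_2)
  also have "\<dots> \<le> (\<bar>M$1$1\<bar> + \<bar>M$1$2\<bar>) + (\<bar>M$2$1\<bar> + \<bar>M$2$2\<bar>)"
    using norm_le_l1_cart[of "M$1"] norm_le_l1_cart[of "M$2"] by (simp add: sum_2)
  finally show ?thesis unfolding norm1_def by simp
qed

lemma norm1_nonneg: "norm1 M \<ge> 0"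
  by (simp add: norm1_def)

lemma norm1_mult: "norm1 (A ** B) \<le> norm1 A * norm1 B"
proof -
  have "norm1 (A ** B) \<le> \<bar>A$1$1\<bar>*\<bar>B$1$1\<bar> + \<bar>A$1$2\<bar>*\<bar>B$2$1\<bar> + (\<bar>A$1$1\<bar>*\<bar>B$1$2\<bar> + \<bar>A$1$2\<bar>*\<bar>B$2$2\<bar>)
      + (\<bar>A$2$1\<bar>*\<bar>B$1$1\<bar> + \<bar>A$2$2\<bar>*\<bar>B$2$1\<bar>) + (\<bar>A$2$1\<bar>*\<bar>B$1$2\<bar> + \<bar>A$2$2\<bar>*\<bar>B$2$2\<bar>)"
    unfolding norm1_def mat2_mult_nth
    by (intro add_mono order_trans[OF abs_triangle_ineq]) (simp_all add: abs_mult)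
  also have "\<dots> \<le> norm1 A * norm1 B"
    unfolding norm1_def by (simp add: algebra_simps)
  finally show ?thesis .
qed

lemma fuchsian_det: "fuchsian G \<Longrightarrow> M \<in> G \<Longrightarrow> det M = 1"
  unfolding fuchsian_def by blast

lemma fuchsian_mult: "fuchsian G \<Longrightarrow> M \<in> G \<Longrightarrow> N \<in> G \<Longrightarrow> M ** N \<in> G"
  unfolding fuchsian_def by blast

lemma fuchsian_adj2: "fuchsian G \<Longrightarrow> M \<in> G \<Longrightarrow> adj2 M \<in> G"
  unfolding fuchsian_def using matrix_inv_eq_adj2 by metis

lemma fuchsian_uminus:
  assumes f: "fuchsian G" and M: "M \<in> G"
  shows "- M \<in> G"
proof -
  have "- mat 1 \<in> G" using f unfolding fuchsian_def by blast
  then have "(- mat 1) ** M \<in> G" using fuchsian_mult[OF f _ M] by blast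
  moreover have "(- mat 1) ** M = - M" by (simp add: mat2_eq_iff)
  ultimately show ?thesis by simp
qed

lemma fuchsian_conj_discrete:
  assumes f: "fuchsian G" and B: "det B = 1"
  obtains \<delta> where "\<delta> > 0" "\<And>X. B ** X ** adj2 B \<in> G \<Longrightarrow> norm1 (X - mat 1) < \<delta> \<Longrightarrow> X = mat 1"
proof -
  obtain e where e: "e > 0" "\<forall>M\<in>G. norm (M - mat 1) < e \<longrightarrow> M = mat 1"
    using f unfolding fuchsian_def by blast
  define C where "C = norm1 B * norm1 (adj2 B) + 1"
  have C: "C > 0" unfolding C_def using norm1_nonneg[of B] norm1_nonneg[of "adj2 B"] by (simp add: add_nonneg_pos)
  have "X = mat 1" if X: "B ** X ** adj2 B \<in> G" and small: "norm1 (X - mat 1) < e / C" for X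
  proof -
    have "B ** X ** adj2 B - mat 1 = B ** (X - mat 1) ** adj2 B"
      using conj_diff[of B X "mat 1" "adj2 B"] conj_one[OF B] by simp
    then have "norm (B ** X ** adj2 B - mat 1) \<le> norm1 (B ** (X - mat 1) ** adj2 B)"
      by (simp add: norm_le_norm1)
    also have "\<dots> \<le> norm1 B * norm1 (X - mat 1) * norm1 (adj2 B)"
      using norm1_mult[of "B ** (X - mat 1)" "adj2 B"] norm1_mult[of B "X - mat 1"] norm1_nonneg[of "adj2 B"]
      by (meson mult_right_mono order_trans)
    also have "\<dots> \<le> C * norm1 (X - mat 1)"
      unfolding C_def using norm1_nonneg[of "X - mat 1"] by (simp add: algebra_simps)
    also have "\<dots> < e" using small C by (simp add: field_simps)
    finally have "B ** X ** adj2 B = mat 1" using e(2) X by blast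
    then have "adj2 B ** (B ** X ** adj2 B) ** B = mat 1"
      using B by (simp add: matrix_mul_rid adj2_mult_self)
    then show "X = mat 1"
      using B by (simp add: matrix_mul_assoc[symmetric] adj2_mult_cancel adj2_mult_self matrix_mul_rid)
  qed
  then show thesis using that[of "e / C"] e(1) C by simp
qed

lemma shimizu_recurrence_tendsto:
  fixes u \<alpha> :: "nat \<Rightarrow> real"
  assumes u: "\<And>n. u (Suc n) = - (u n)\<^sup>2" and \<alpha>: "\<And>n. \<alpha> (Suc n) = 1 - \<alpha> n * u n" and u0: "\<bar>u 0\<bar> < 1"
  shows "u \<longlonglongrightarrow> 0" and "\<alpha> \<longlonglongrightarrow> 1"
proof -
  define q where "q = \<bar>u 0\<bar>"
  have q: "0 \<le> q" "q < 1" using u0 unfolding q_def by auto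
  have qS: "q ^ Suc n \<le> q" for n using q by (simp add: mult_left_le power_le_one)
  have u_le: "\<bar>u n\<bar> \<le> q ^ Suc n" for n
  proof (induction n)
    case (Suc n)
    have "\<bar>u n\<bar> * \<bar>u n\<bar> \<le> q * \<bar>u n\<bar>" using Suc qS[of n] by (intro mult_right_mono) auto
    also have "\<dots> \<le> q * q ^ Suc n" using Suc q by (simp add: mult_left_mono)
    finally show ?case using u[of n] by (simp add: power2_eq_square abs_mult)
  qed (simp add: q_def)
  have uq: "\<bar>u n\<bar> \<le> q" for n by (rule order_trans[OF u_le qS])
  have "(\<lambda>n. q ^ Suc n) \<longlonglongrightarrow> 0" using q by (intro LIMSEQ_power_zero[THEN LIMSEQ_Suc]) simp
  then show ulim: "u \<longlonglongrightarrow> 0"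
    by (rule Lim_null_comparison[OF always_eventually, rotated]) (use u_le in simp)
  define M where "M = max \<bar>\<alpha> 0\<bar> (1 / (1 - q))"
  have M: "M \<ge> 0" "1 + M * q \<le> M"
  proof -
    show "M \<ge> 0" unfolding M_def by simp
    have "1 / (1 - q) \<le> M" unfolding M_def by simp
    then have "1 \<le> M * (1 - q)" using q by (simp add: pos_divide_le_eq)
    then show "1 + M * q \<le> M" by (simp add: algebra_simps)
  qed
  have \<alpha>M: "\<bar>\<alpha> n\<bar> \<le> M" for n
  proof (induction n)
    case (Suc n)
    have "\<bar>\<alpha> (Suc n)\<bar> \<le> 1 + \<bar>\<alpha> n\<bar> * \<bar>u n\<bar>" using \<alpha>[of n] abs_triangle_ineq4[of 1 "\<alpha> n * u n"] by (simp add: abs_mult)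
    also have "\<dots> \<le> 1 + M * q" using Suc uq[of n] M by (simp add: mult_mono)
    finally show ?case using M by simp
  qed (simp add: M_def)
  have "(\<lambda>n. M * \<bar>u n\<bar>) \<longlonglongrightarrow> 0" using tendsto_mult_right_zero[OF tendsto_rabs_zero[OF ulim]] by simp
  then have "(\<lambda>n. \<alpha> (Suc n) - 1) \<longlonglongrightarrow> 0"
  proof (rule Lim_null_comparison[OF always_eventually, rotated], intro allI)
    show "norm (\<alpha> (Suc n) - 1) \<le> M * \<bar>u n\<bar>" for n
      using \<alpha>[of n] \<alpha>M[of n] by (simp add: abs_mult mult_right_mono)
  qed
  then have "(\<lambda>n. \<alpha> (Suc n)) \<longlonglongrightarrow> 1" by (simp add: LIM_zero_iff)
  then show "\<alpha> \<longlonglongrightarrow> 1" by (rule LIMSEQ_imp_Suc)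
qed
lemma conj_translation:
  assumes "det M = 1"
  shows "M ** mat2_of 1 b 0 1 ** adj2 M = mat2_of (1 - b*M$1$1*M$2$1) (b*(M$1$1)\<^sup>2) (-b*(M$2$1)\<^sup>2) (1 + b*M$1$1*M$2$1)"
  using assms by (simp add: mat2_eq_iff det_2 power2_eq_square algebra_simps)

lemma shimizu:
  assumes f: "fuchsian G" and B: "det B = 1" and b: "b \<noteq> 0"
    and T: "B ** mat2_of 1 b 0 1 ** adj2 B \<in> G" and Q: "B ** Q ** adj2 B \<in> G" and dQ: "det Q = 1"
    and c: "Q$2$1 \<noteq> 0"
  shows "\<bar>Q$2$1 * b\<bar> \<ge> 1"
proof (rule ccontr)
  assume "\<not> \<bar>Q$2$1 * b\<bar> \<ge> 1"
  define T where "T = mat2_of 1 b 0 1"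
  have dT: "det T = 1" unfolding T_def by (simp add: det_2)
  \<comment> \<open>The iterates of \<open>Q \<mapsto> Q T Q\<inverse>\<close> have entries satisfying the recurrence of \<open>shimizu_recurrence_tendsto\<close>.\<close>
  define Qs where "Qs = rec_nat Q (\<lambda>n M. M ** T ** adj2 M)"
  have Qs0: "Qs 0 = Q" and QsS: "\<And>n. Qs (Suc n) = Qs n ** T ** adj2 (Qs n)" unfolding Qs_def by simp_all
  have Qs: "det (Qs n) = 1 \<and> B ** Qs n ** adj2 B \<in> G" for n
  proof (induction n)
    case (Suc n)
    then have "B ** Qs (Suc n) ** adj2 B = ((B ** Qs n ** adj2 B) ** (B ** T ** adj2 B)) ** adj2 (B ** Qs n ** adj2 B)"
      unfolding QsS conj_adj2[OF B] conj_mult[OF B] by simp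
    then show ?case
      using Suc dT T fuchsian_mult[OF f] fuchsian_adj2[OF f] unfolding QsS T_def by (simp add: det_mul)
  qed (use Qs0 dQ Q in simp)
  define \<alpha> u where "\<alpha> n = Qs n $1$1" and "u n = b * Qs n $2$1" for n
  have Qs_Suc: "Qs (Suc n) = mat2_of (1 - \<alpha> n * u n) (b * (\<alpha> n)\<^sup>2) (- (u n)\<^sup>2 / b) (1 + \<alpha> n * u n)" for n
    unfolding QsS T_def conj_translation[OF conjunct1[OF Qs]] \<alpha>_def u_def using b
    by (simp add: mat2_eq_iff power2_eq_square field_simps)
  have "u (Suc n) = - (u n)\<^sup>2" "\<alpha> (Suc n) = 1 - \<alpha> n * u n" for n
    using b by (simp_all add: u_def[of "Suc n"] \<alpha>_def[of "Suc n"] Qs_Suc)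
  moreover have "\<bar>u 0\<bar> < 1" using \<open>\<not> \<bar>Q$2$1 * b\<bar> \<ge> 1\<close> unfolding u_def Qs0 by (simp add: mult.commute)
  ultimately have ulim: "u \<longlonglongrightarrow> 0" and \<alpha>lim: "\<alpha> \<longlonglongrightarrow> 1" using shimizu_recurrence_tendsto by blast+
  have u_nonzero: "u n \<noteq> 0" for n
    by (induction n) (use b c in \<open>simp_all add: u_def Qs0 Qs_Suc\<close>)
  \<comment> \<open>\<open>Qs (Suc n)\<close> converges to \<open>T\<close>, so discreteness forces \<open>Qs (Suc n) = T\<close>, that is \<open>u (Suc n) = 0\<close>.\<close>
  define X where "X n = Qs (Suc n) ** adj2 T" for n
  have "norm1 (X n - mat 1) = \<bar>\<alpha> n * u n\<bar> + \<bar>b * ((\<alpha> n)\<^sup>2 - 1 + \<alpha> n * u n)\<bar> + \<bar>(u n)\<^sup>2 / b\<bar> + \<bar>(u n)\<^sup>2 + \<alpha> n * u n\<bar>" for n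
    unfolding X_def Qs_Suc T_def norm1_def using b by (simp add: power2_eq_square field_simps abs_minus_commute)
  moreover have "(\<lambda>n. \<bar>\<alpha> n * u n\<bar> + \<bar>b * ((\<alpha> n)\<^sup>2 - 1 + \<alpha> n * u n)\<bar> + \<bar>(u n)\<^sup>2 / b\<bar> + \<bar>(u n)\<^sup>2 + \<alpha> n * u n\<bar>)
      \<longlonglongrightarrow> \<bar>1 * 0\<bar> + \<bar>b * (1\<^sup>2 - 1 + 1 * 0)\<bar> + \<bar>0\<^sup>2 / b\<bar> + \<bar>0\<^sup>2 + 1 * 0\<bar>"
    by (intro tendsto_intros ulim \<alpha>lim) (use b in simp)
  ultimately have "(\<lambda>n. norm1 (X n - mat 1)) \<longlonglongrightarrow> 0" by simp
  obtain \<delta> where \<delta>: "\<delta> > 0" "\<And>X. B ** X ** adj2 B \<in> G \<Longrightarrow> norm1 (X - mat 1) < \<delta> \<Longrightarrow> X = mat 1"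
    using fuchsian_conj_discrete[OF f B] by blast
  have "eventually (\<lambda>n. norm1 (X n - mat 1) < \<delta>) sequentially"
    using \<open>(\<lambda>n. norm1 (X n - mat 1)) \<longlonglongrightarrow> 0\<close> \<delta>(1) by (rule order_tendstoD(2))
  then obtain n where "norm1 (X n - mat 1) < \<delta>" unfolding eventually_sequentially by blast
  moreover have "B ** X n ** adj2 B \<in> G"
  proof -
    have "B ** X n ** adj2 B = (B ** Qs (Suc n) ** adj2 B) ** adj2 (B ** T ** adj2 B)"
      unfolding X_def conj_adj2[OF B] conj_mult[OF B] ..
    then show ?thesis using Qs fuchsian_mult[OF f] fuchsian_adj2[OF f T] unfolding T_def by metis
  qed
  ultimately have "X n = mat 1" using \<delta>(2) by blast
  then have "Qs (Suc n) = T"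
    unfolding X_def by (metis adj2_mult_self dT matrix_mul_assoc matrix_mul_lid matrix_mul_rid)
  then show False using u_nonzero[of "Suc n"] unfolding u_def T_def by simp
qed

section \<open>Parabolic elements in the frame of the geodesic\<close>

text \<open>A parabolic element of \<open>G\<close> fixing the boundary point \<open>g y\<close>, recorded through its normal form
  \<open>parab_mat e k y\<close> in the frame \<open>g\<close>.\<close>

definition normal_parabolic :: "mat2 set \<Rightarrow> mat2 \<Rightarrow> real \<Rightarrow> real \<Rightarrow> real \<Rightarrow> bool" where
  "normal_parabolic G g e k y \<longleftrightarrow> (e = 1 \<or> e = -1) \<and> k \<noteq> 0 \<and> g ** parab_mat e k y ** adj2 g \<in> G"

lemma parabolic_parab_mat:
  assumes "e = 1 \<or> e = -1" "k \<noteq> 0"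
  shows "parabolic (parab_mat e k y)"
  using assms by (auto simp: parabolic_def mtrace_def parab_mat_def mat2_eq_iff)

lemma parab_mat_eq_conj_translation: "parab_mat e k y = inf_to y ** mat2_of e (e*k) 0 e ** adj2 (inf_to y)"
  using conj_conj_cancel[of "inf_to y" "parab_mat e k y"] parab_mat_conj_inf_to_same by simp

lemma conj_conj: "(g ** h) ** X ** adj2 (g ** h) = g ** (h ** X ** adj2 h) ** adj2 g"
  by (simp add: adj2_mult matrix_mul_assoc)

lemma normal_parabolic_in_group:
  assumes "fuchsian G" "normal_parabolic G g e k y"
  shows "g ** parab_mat 1 k y ** adj2 g \<in> G"
proof (cases "e = 1")
  case False
  then have "g ** parab_mat 1 k y ** adj2 g = - (g ** parab_mat e k y ** adj2 g)"
    using assms(2) conj_uminus[of g "parab_mat 1 k y" "adj2 g"] parab_mat_neg unfolding normal_parabolic_def by auto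
  then show ?thesis using assms fuchsian_uminus unfolding normal_parabolic_def by metis
qed (use assms in \<open>simp add: normal_parabolic_def\<close>)

lemma normal_parabolic_size_lower_bound:
  assumes f: "fuchsian G" and g: "det g = 1"
  obtains \<delta> where "\<delta> > 0" "\<And>e k y. normal_parabolic G g e k y \<Longrightarrow> \<delta> \<le> \<bar>k\<bar> * (1 + \<bar>y\<bar>)\<^sup>2"
proof -
  obtain \<delta> where \<delta>: "\<delta> > 0" "\<And>X. g ** X ** adj2 g \<in> G \<Longrightarrow> norm1 (X - mat 1) < \<delta> \<Longrightarrow> X = mat 1"
    using fuchsian_conj_discrete[OF f g] by blast
  have "norm1 (parab_mat 1 k y - mat 1) = \<bar>k\<bar> * (1 + \<bar>y\<bar>)\<^sup>2" for k y
    by (simp add: norm1_def parab_mat_def abs_mult power2_eq_square algebra_simps)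
  then have "\<delta> \<le> \<bar>k\<bar> * (1 + \<bar>y\<bar>)\<^sup>2" if "normal_parabolic G g e k y" for e k y
    using \<delta>(2)[OF normal_parabolic_in_group[OF f that]] parab_mat_neq_one that
    unfolding normal_parabolic_def by force
  then show thesis using that \<delta>(1) by blast
qed

lemma normal_parabolic_horoballs_disjoint:
  assumes f: "fuchsian G" and g: "det g = 1"
    and p1: "normal_parabolic G g e1 k1 y1" and p2: "normal_parabolic G g e2 k2 y2"
    and "y1 \<noteq> y2" and l1: "2*\<bar>y1\<bar>*\<bar>k1\<bar> \<le> 1" and l2: "2*\<bar>y2\<bar>*\<bar>k2\<bar> \<le> 1"
  shows "horoball (Some y1) \<bar>y1\<bar> \<inter> horoball (Some y2) \<bar>y2\<bar> = {}"
proof -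
  define B where "B = g ** inf_to y1"
  have B: "det B = 1" unfolding B_def using g by (simp add: det_mul)
  have "B ** mat2_of 1 k1 0 1 ** adj2 B = g ** parab_mat 1 k1 y1 ** adj2 g"
    unfolding B_def conj_conj parab_mat_eq_conj_translation[of 1] by simp
  then have T: "B ** mat2_of 1 k1 0 1 ** adj2 B \<in> G"
    using normal_parabolic_in_group[OF f p1] by simp
  define Q where "Q = adj2 (inf_to y1) ** parab_mat e2 k2 y2 ** inf_to y1"
  have "B ** Q ** adj2 B = g ** parab_mat e2 k2 y2 ** adj2 g"
    unfolding B_def conj_conj Q_def conj_conj_cancel[OF det_inf_to] ..
  then have QG: "B ** Q ** adj2 B \<in> G" using p2 unfolding normal_parabolic_def by simp
  have dQ: "det Q = 1" unfolding Q_def using det_parab_mat[of e2 k2 y2] p2 by (auto simp: det_mul normal_parabolic_def)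
  have Q21: "Q$2$1 = - e2*k2*(y1-y2)\<^sup>2" unfolding Q_def parab_mat_conj_inf_to by simp
  have e2: "\<bar>e2\<bar> = 1" and k: "k1 \<noteq> 0" "k2 \<noteq> 0" using p1 p2 unfolding normal_parabolic_def by auto
  then have "Q$2$1 \<noteq> 0" unfolding Q21 using \<open>y1 \<noteq> y2\<close> by auto
  from shimizu[OF f B k(1) T QG dQ this]
  have "\<bar>k1\<bar> * \<bar>k2\<bar> * (y1 - y2)\<^sup>2 \<ge> 1" unfolding Q21 using e2 by (simp add: abs_mult mult_ac)
  moreover have "(2*\<bar>y1\<bar>*\<bar>k1\<bar>) * (2*\<bar>y2\<bar>*\<bar>k2\<bar>) \<le> 1" using mult_le_one[OF l1 _ l2] by simp
  ultimately have "4*\<bar>y1\<bar>*\<bar>y2\<bar> * (\<bar>k1\<bar> * \<bar>k2\<bar>) \<le> (y1 - y2)\<^sup>2 * (\<bar>k1\<bar> * \<bar>k2\<bar>)"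
    by (simp add: algebra_simps)
  then have "4*\<bar>y1\<bar>*\<bar>y2\<bar> \<le> (y1 - y2)\<^sup>2" using k by (simp add: mult_le_cancel_right)
  \<comment> \<open>The two horoballs are open disks whose radii add up to at most the distance of their centres.\<close>
  moreover have "(cmod (Complex y1 \<bar>y1\<bar> - Complex y2 \<bar>y2\<bar>))\<^sup>2 = (y1 - y2)\<^sup>2 + (\<bar>y1\<bar> - \<bar>y2\<bar>)\<^sup>2"
    by (simp only: cmod_power2) simp
  moreover have "(\<bar>y1\<bar> + \<bar>y2\<bar>)\<^sup>2 = (\<bar>y1\<bar> - \<bar>y2\<bar>)\<^sup>2 + 4*\<bar>y1\<bar>*\<bar>y2\<bar>"
    by (simp add: power2_eq_square algebra_simps)
  ultimately have "(\<bar>y1\<bar> + \<bar>y2\<bar>)\<^sup>2 \<le> (cmod (Complex y1 \<bar>y1\<bar> - Complex y2 \<bar>y2\<bar>))\<^sup>2"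
    by linarith
  then have dist: "\<bar>y1\<bar> + \<bar>y2\<bar> \<le> cmod (Complex y1 \<bar>y1\<bar> - Complex y2 \<bar>y2\<bar>)"
    by (rule power2_le_imp_le) simp
  show ?thesis
  proof (rule ccontr)
    assume "horoball (Some y1) \<bar>y1\<bar> \<inter> horoball (Some y2) \<bar>y2\<bar> \<noteq> {}"
    then obtain w where "cmod (w - Complex y1 \<bar>y1\<bar>) < \<bar>y1\<bar>" "cmod (w - Complex y2 \<bar>y2\<bar>) < \<bar>y2\<bar>" by auto
    moreover have "cmod (Complex y1 \<bar>y1\<bar> - Complex y2 \<bar>y2\<bar>) \<le> cmod (w - Complex y1 \<bar>y1\<bar>) + cmod (w - Complex y2 \<bar>y2\<bar>)"
      using norm_triangle_ineq4[of "w - Complex y2 \<bar>y2\<bar>" "w - Complex y1 \<bar>y1\<bar>"] by (simp add: add.commute)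
    ultimately show False using dist by linarith
  qed
qed

lemma mob_image_eq:
  assumes A: "det A = 1" and "S \<subseteq> {z. Im z > 0}" "S' \<subseteq> {z. Im z > 0}"
    and iff: "\<And>z. Im z > 0 \<Longrightarrow> mob A z \<in> S' \<longleftrightarrow> z \<in> S"
  shows "mob A ` S = S'"
proof
  show "mob A ` S \<subseteq> S'" using assms by auto
  show "S' \<subseteq> mob A ` S"
  proof
    fix w assume w: "w \<in> S'"
    then have wI: "Im w > 0" using assms by auto
    then have "mob (adj2 A) w \<in> S" "mob A (mob (adj2 A) w) = w"
      using iff[of "mob (adj2 A) w"] Im_mob_pos[OF wI, of "adj2 A"] w A mob_mob_adj2[OF A wI] by simp_all
    then show "w \<in> mob A ` S" by force
  qed
qed

lemma mob_image_horocycle_horoball: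
  assumes A: "det A = 1" and r: "r > 0"
  obtains r' where "r' > 0" "mob A ` horocycle \<xi> r = horocycle (bd_act A \<xi>) r'"
    "mob A ` horoball \<xi> r = horoball (bd_act A \<xi>) r'"
proof -
  obtain r' where r': "r' > 0" and iff: "\<And>z. Im z > 0 \<Longrightarrow>
      (mob A z \<in> horocycle (bd_act A \<xi>) r' \<longleftrightarrow> z \<in> horocycle \<xi> r) \<and>
      (mob A z \<in> horoball (bd_act A \<xi>) r' \<longleftrightarrow> z \<in> horoball \<xi> r)"
    using mob_horocycle_horoball_iff[OF A r] by blast
  show thesis
  proof (rule that[OF r'])
    show "mob A ` horocycle \<xi> r = horocycle (bd_act A \<xi>) r'"
      using iff horocycle_Im_pos[OF r] horocycle_Im_pos[OF r'] by (intro mob_image_eq[OF A]) auto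
    show "mob A ` horoball \<xi> r = horoball (bd_act A \<xi>) r'"
      using iff horoball_Im_pos[OF r] horoball_Im_pos[OF r'] by (intro mob_image_eq[OF A]) auto
  qed
qed

lemma arclen_param_horocycle_Im_pos:
  assumes "r > 0" "arclen_param H (horocycle \<xi> r)"
  shows "Im (H s) > 0"
  using assms horocycle_Im_pos unfolding arclen_param_def bij_betw_def by blast

lemma mob_arclen_param_horocycle:
  assumes A: "det A = 1" and r: "r > 0" and H: "arclen_param H (horocycle \<xi> r)"
  obtains r' where "r' > 0" "arclen_param (\<lambda>s. mob A (H s)) (horocycle (bd_act A \<xi>) r')"
    "mob A ` horocycle \<xi> r = horocycle (bd_act A \<xi>) r'" "mob A ` horoball \<xi> r = horoball (bd_act A \<xi>) r'"
proof -
  obtain r' where "r' > 0" and img: "mob A ` horocycle \<xi> r = horocycle (bd_act A \<xi>) r'"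
    "mob A ` horoball \<xi> r = horoball (bd_act A \<xi>) r'"
    using mob_image_horocycle_horoball[OF A r] by blast
  moreover have "arclen_param (\<lambda>s. mob A (H s)) (mob A ` horocycle \<xi> r)"
    using arclen_param_mob[OF A H] horocycle_Im_pos[OF r] by blast
  ultimately show thesis using that by simp
qed

lemma bd_act_parab_mat: "e*e = 1 \<Longrightarrow> bd_act (parab_mat e k y) (Some y) = Some y"
  by (auto simp: parab_mat_def field_simps power2_eq_square)

lemma horocycle_through_imag_bounds:
  assumes E: "E \<ge> 1" and "\<i> * of_real E \<in> horocycle (Some y) \<rho>"
  shows "1 \<le> 2*\<rho>" and "\<bar>y\<bar> \<le> \<rho>"
proof -
  have "(cmod (\<i> * of_real E - Complex y \<rho>))\<^sup>2 = \<rho>\<^sup>2" using assms(2) by simp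
  then have "y\<^sup>2 + (E - \<rho>)\<^sup>2 = \<rho>\<^sup>2" by (simp only: cmod_power2) simp
  then have rel: "2*E*\<rho> = y\<^sup>2 + E\<^sup>2" by (simp add: power2_eq_square algebra_simps)
  have "E * E \<le> E * (2*\<rho>)" using rel by (simp add: power2_eq_square algebra_simps)
  then show "1 \<le> 2*\<rho>" using E by (simp add: mult_le_cancel_left_pos)
  have "0 \<le> (\<bar>y\<bar> - E)\<^sup>2" by simp
  then have "E * \<bar>y\<bar> \<le> E * \<rho>" using rel by (simp add: power2_eq_square algebra_simps)
  then show "\<bar>y\<bar> \<le> \<rho>" using E by (simp add: mult_le_cancel_left_pos)
qed

lemma horocycle_crossing_normal_parabolic:
  assumes f: "fuchsian G" and u: "u \<in> T1H" and nfe: "\<not> parabolic_fixed_point G (fwd_end u)"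
    and p: "p \<in> G" "parabolic p" "bd_act p \<xi> = \<xi>" and r: "r > 0"
    and H: "arclen_param H (horocycle \<xi> r)" and shift: "\<And>s. mob p (H s) = H (s + l)" and l: "l > 0"
    and t: "t \<ge> 0" and meet: "geod u t \<in> horocycle \<xi> r"
  obtains e k y where "normal_parabolic G (frame_mat u) e k y" "\<bar>k\<bar> \<le> l" "2*\<bar>y\<bar>*\<bar>k\<bar> \<le> l"
proof -
  define g where "g = frame_mat u"
  have g: "det g = 1" and gi: "det (adj2 g) = 1" unfolding g_def using frame_mat[OF u] by simp_all
  have dp: "det p = 1" using fuchsian_det[OF f p(1)] .
  obtain y where y: "bd_act (adj2 g) \<xi> = Some y"
  proof (cases "bd_act (adj2 g) \<xi>")
    case None
    then have "\<xi> = fwd_end u" using bd_act_bd_act_adj2[OF g, of \<xi>] fwd_end_eq_frame_mat[OF u] g_def by simp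
    then show ?thesis using p nfe unfolding parabolic_fixed_point_def by blast
  qed
  define q where "q = adj2 g ** p ** g"
  have gy: "bd_act g (Some y) = \<xi>" using bd_act_bd_act_adj2[OF g, of \<xi>] y by simp
  have "bd_act q (Some y) = Some y"
    unfolding q_def using gi dp g by (simp only: bd_act_mult det_mul mult_1 gy p(3) y)
  then obtain e k where ek: "e = 1 \<or> e = -1" "k \<noteq> 0" "q = parab_mat e k y"
    using parabolic_fixing_real[of q y] parabolic_conj[OF g p(2)] g dp unfolding q_def by (auto simp: det_mul)
  have normal: "normal_parabolic G g e k y"
    using ek p(1) conj_conj_cancel[OF g, of p] unfolding normal_parabolic_def q_def by simp
  obtain \<rho> where \<rho>: "\<rho> > 0" and K: "arclen_param (\<lambda>s. mob (adj2 g) (H s)) (horocycle (Some y) \<rho>)"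
    and img: "mob (adj2 g) ` horocycle \<xi> r = horocycle (Some y) \<rho>"
    using mob_arclen_param_horocycle[OF gi r H] y by metis
  have "mob (parab_mat e k y) (mob (adj2 g) (H s)) = mob (adj2 g) (H (s + l))" for s
    using mob_conj[OF gi dp arclen_param_horocycle_Im_pos[OF r H]] shift ek(3) unfolding q_def by simp
  moreover have "e*e = 1" using ek by auto
  ultimately have translation: "2*\<rho>*\<bar>k\<bar> \<le> l"
    using parab_mat_translation_length_ge[OF \<rho> _ l K] by blast
  have "geod u t = mob g (\<i> * of_real (exp t))" unfolding geod_eq_frame_mat[OF u] g_def ..
  then have "\<i> * of_real (exp t) \<in> horocycle (Some y) \<rho>"
    using meet img mob_adj2_mob[OF g, of "\<i> * of_real (exp t)"] by force
  moreover have "exp t \<ge> 1" using t by simp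
  ultimately have "1 \<le> 2*\<rho>" "\<bar>y\<bar> \<le> \<rho>" using horocycle_through_imag_bounds by blast+
  then have "\<bar>k\<bar> \<le> l" "2*\<bar>y\<bar>*\<bar>k\<bar> \<le> l"
    using translation mult_right_mono[of 1 "2*\<rho>" "\<bar>k\<bar>"] mult_right_mono[of "\<bar>y\<bar>" \<rho> "2*\<bar>k\<bar>"] by linarith+
  then show thesis using that normal unfolding g_def by blast
qed

lemma mob_common_tangent:
  assumes g: "det g = 1" and I: "Im (\<gamma> s) > 0" and meet: "\<gamma> s = K s0"
    and "(\<gamma> has_vector_derivative v) (at s)" "(K has_vector_derivative v) (at s0)"
  shows "\<exists>v'. ((\<lambda>t. mob g (\<gamma> t)) has_vector_derivative v') (at s) \<and>
              ((\<lambda>t. mob g (K t)) has_vector_derivative v') (at s0)"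
proof -
  define D where "D = 1 / (mob_den g (\<gamma> s))\<^sup>2"
  have D: "(mob g has_field_derivative D) (at (\<gamma> s))"
    unfolding D_def using mob_has_field_derivative[OF g] mob_den_nonzero[OF _ I] g by simp
  have "((mob g \<circ> \<gamma>) has_vector_derivative v * D) (at s)"
    by (rule field_vector_diff_chain_at[OF assms(4) D])
  moreover have "((mob g \<circ> K) has_vector_derivative v * D) (at s0)"
    using field_vector_diff_chain_at[OF assms(5)] D meet by simp
  ultimately show ?thesis unfolding comp_def by blast
qed

lemma bd_act_conj_fixed:
  assumes "det g = 1" "det P = 1" "bd_act P \<eta> = \<eta>"
  shows "bd_act (g ** P ** adj2 g) (bd_act g \<eta>) = bd_act g \<eta>"
  using assms by (simp add: bd_act_mult det_mul bd_act_adj2_bd_act)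

text \<open>The horocycle at \<open>y\<close> of Euclidean radius \<open>\<bar>y\<bar>\<close> touches the imaginary axis at \<open>\<i> \<bar>y\<bar>\<close>; moved by the
  frame of \<open>u\<close>, it is tangent to the geodesic of \<open>u\<close> at time \<open>ln \<bar>y\<bar>\<close>, with \<open>p\<close> or \<open>p\<inverse>\<close> chosen so
  that the orientation matches.\<close>

lemma normal_parabolic_tangent_horocycle:
  assumes f: "fuchsian G" and u: "u \<in> T1H" and np: "normal_parabolic G (frame_mat u) e k y" and y: "1 \<le> \<bar>y\<bar>"
  obtains H p r where "p \<in> G" "parabolic p"
    "bd_act p (bd_act (frame_mat u) (Some y)) = bd_act (frame_mat u) (Some y)"
    "r > 0" "arclen_param H (horocycle (bd_act (frame_mat u) (Some y)) r)"
    "\<And>s. mob p (H s) = H (s + 2*\<bar>y\<bar>*\<bar>k\<bar>)" "geod u (ln \<bar>y\<bar>) = H 0"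
    "\<exists>v. (geod u has_vector_derivative v) (at (ln \<bar>y\<bar>)) \<and> (H has_vector_derivative v) (at 0)"
    "horoball (bd_act (frame_mat u) (Some y)) r = mob (frame_mat u) ` horoball (Some y) \<bar>y\<bar>"
proof -
  define g where "g = frame_mat u"
  have g: "det g = 1" unfolding g_def using frame_mat[OF u] by simp
  have e: "e = 1 \<or> e = -1" and e1: "e*e = 1" and k: "k \<noteq> 0" and P: "g ** parab_mat e k y ** adj2 g \<in> G"
    using np unfolding normal_parabolic_def g_def by auto
  have ay: "\<bar>y\<bar> > 0" and y0: "y \<noteq> 0" using y by auto
  obtain K \<tau> where K: "arclen_param K (horocycle (Some y) \<bar>y\<bar>)" "K 0 = \<i> * of_real \<bar>y\<bar>"
    "(K has_vector_derivative \<i> * of_real \<bar>y\<bar>) (at 0)" "\<tau> = k \<or> \<tau> = -k"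
    "\<And>s. mob (parab_mat e \<tau> y) (K s) = K (s + 2*\<bar>y\<bar>*\<bar>k\<bar>)"
    using tangent_horocycle_param[OF y0 e1 k] by blast
  define p where "p = g ** parab_mat e \<tau> y ** adj2 g"
  have pG: "p \<in> G"
  proof (cases "\<tau> = k")
    case False
    then have "p = adj2 (g ** parab_mat e k y ** adj2 g)"
      using K(4) unfolding p_def conj_adj2[OF g] adj2_parab_mat by auto
    then show ?thesis using fuchsian_adj2[OF f P] by simp
  qed (use P p_def in simp)
  have par: "parabolic p"
    using parabolic_conj[of "adj2 g", OF _ parabolic_parab_mat[OF e, of \<tau> y]] g K(4) k unfolding p_def by auto
  have fixed: "bd_act p (bd_act g (Some y)) = bd_act g (Some y)"
    unfolding p_def using bd_act_conj_fixed[OF g det_parab_mat[OF e1] bd_act_parab_mat[OF e1]] .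
  obtain r where r: "r > 0" and H: "arclen_param (\<lambda>s. mob g (K s)) (horocycle (bd_act g (Some y)) r)"
    and img: "mob g ` horoball (Some y) \<bar>y\<bar> = horoball (bd_act g (Some y)) r"
    using mob_arclen_param_horocycle[OF g ay K(1)] by metis
  have shift: "mob p (mob g (K s)) = mob g (K (s + 2*\<bar>y\<bar>*\<bar>k\<bar>))" for s
    unfolding p_def using mob_conj[OF g det_parab_mat[OF e1] arclen_param_horocycle_Im_pos[OF ay K(1)]] K(5) by simp
  have geod: "geod u = (\<lambda>s. mob g (\<i> * of_real (exp s)))"
    unfolding g_def by (rule geod_eq_frame_mat[OF u])
  then have meet: "geod u (ln \<bar>y\<bar>) = mob g (K 0)" using ay K(2) by simp
  have "((\<lambda>s. \<i> * of_real (exp s)) has_vector_derivative \<i> * of_real \<bar>y\<bar>) (at (ln \<bar>y\<bar>))"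
    using imag_exp_has_vector_derivative[of "ln \<bar>y\<bar>"] ay by simp
  then have tangent: "\<exists>v. (geod u has_vector_derivative v) (at (ln \<bar>y\<bar>)) \<and>
      ((\<lambda>s. mob g (K s)) has_vector_derivative v) (at 0)"
    unfolding geod using mob_common_tangent[OF g _ _ _ K(3)] ay K(2) by simp
  show thesis
    by (rule that[folded g_def, OF pG par fixed r H shift meet tangent img[symmetric]])
qed

lemma closed_horo_length_approx:
  assumes f: "fuchsian G" and \<xi>: "parabolic_fixed_point G \<xi>" and r: "r > 0" and \<epsilon>: "\<epsilon> > 0"
  obtains p l H where "p \<in> G" "parabolic p" "bd_act p \<xi> = \<xi>" "l > 0" "l < closed_horo_length G \<xi> r + \<epsilon>"
    "arclen_param H (horocycle \<xi> r)" "\<And>s. mob p (H s) = H (s + l)"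
proof -
  define S where "S = {l. l > 0 \<and> (\<exists>p\<in>G. parabolic p \<and> bd_act p \<xi> = \<xi> \<and>
     (\<exists>H. arclen_param H (horocycle \<xi> r) \<and> (\<forall>s. mob p (H s) = H (s + l))))}"
  obtain p0 where p0: "p0 \<in> G" "parabolic p0" "bd_act p0 \<xi> = \<xi>"
    using \<xi> unfolding parabolic_fixed_point_def by blast
  obtain l0 H0 where "l0 > 0" "arclen_param H0 (horocycle \<xi> r)" "\<And>s. mob p0 (H0 s) = H0 (s + l0)"
    using parabolic_horocycle_param[OF fuchsian_det[OF f p0(1)] p0(2,3) r] by blast
  then have "S \<noteq> {}" unfolding S_def using p0 by blast
  moreover have "bdd_below S" unfolding S_def by (rule bdd_belowI[of _ 0]) auto
  moreover have "Inf S < Inf S + \<epsilon>" using \<epsilon> by simp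
  ultimately obtain l where "l \<in> S" "l < Inf S + \<epsilon>" using cInf_less_iff by blast
  then show thesis
    using that unfolding S_def closed_horo_length_def by blast
qed

lemma cusp_recurrent_normal_parabolics:
  assumes f: "fuchsian G" and u: "u \<in> T1H" and cr: "cusp_recurrent G u"
  obtains e k y l where "\<And>n. normal_parabolic G (frame_mat u) (e n) (k n) (y n)"
    "\<And>n. \<bar>k n\<bar> \<le> l n" "\<And>n. 2*\<bar>y n\<bar>*\<bar>k n\<bar> \<le> l n" "l \<longlonglongrightarrow> 0"
proof -
  obtain \<xi> r t where data: "\<And>n. t n \<ge> 0 \<and> parabolic_fixed_point G (\<xi> n) \<and> r n > 0 \<and> geod u (t n) \<in> horocycle (\<xi> n) (r n)"
    and lengths: "(\<lambda>n. closed_horo_length G (\<xi> n) (r n)) \<longlonglongrightarrow> 0"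
    and nfe: "\<not> parabolic_fixed_point G (fwd_end u)"
    using cr unfolding cusp_recurrent_def by blast
  define bound where "bound n = closed_horo_length G (\<xi> n) (r n) + inverse (real (Suc n))" for n
  have "\<exists>e k y l. normal_parabolic G (frame_mat u) e k y \<and> \<bar>k\<bar> \<le> l \<and> 2*\<bar>y\<bar>*\<bar>k\<bar> \<le> l \<and> l \<le> bound n" for n
  proof -
    have t: "t n \<ge> 0" and \<xi>: "parabolic_fixed_point G (\<xi> n)" and r: "r n > 0"
      and meet: "geod u (t n) \<in> horocycle (\<xi> n) (r n)"
      using data[of n] by auto
    obtain p l H where p: "p \<in> G" "parabolic p" "bd_act p (\<xi> n) = \<xi> n" and l: "l > 0" "l < bound n"
      and H: "arclen_param H (horocycle (\<xi> n) (r n))" and shift: "\<And>s. mob p (H s) = H (s + l)"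
      using closed_horo_length_approx[OF f \<xi> r, of "inverse (real (Suc n))"] unfolding bound_def by auto
    obtain e k y where "normal_parabolic G (frame_mat u) e k y" "\<bar>k\<bar> \<le> l" "2*\<bar>y\<bar>*\<bar>k\<bar> \<le> l"
      using horocycle_crossing_normal_parabolic[OF f u nfe p r H shift l(1) t meet] by blast
    then show ?thesis using l(2) by (intro exI[of _ e] exI[of _ k] exI[of _ y] exI[of _ l]) simp
  qed
  then obtain e k y l where np: "\<And>n. normal_parabolic G (frame_mat u) (e n) (k n) (y n)"
    and kl: "\<And>n. \<bar>k n\<bar> \<le> l n" and yl: "\<And>n. 2*\<bar>y n\<bar>*\<bar>k n\<bar> \<le> l n" and lb: "\<And>n. l n \<le> bound n"
    by metis
  have "bound \<longlonglongrightarrow> 0"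
    using tendsto_add[OF lengths LIMSEQ_inverse_real_of_nat] unfolding bound_def by simp
  moreover have "0 \<le> l n" for n using kl[of n] by linarith
  ultimately have "l \<longlonglongrightarrow> 0"
    using lb by (intro tendsto_sandwich[of "\<lambda>n. 0" l sequentially bound]) (simp_all add: always_eventually)
  then show thesis using that np kl yl by blast
qed

lemma normal_parabolics_diverge:
  assumes f: "fuchsian G" and g: "det g = 1" and np: "\<And>n. normal_parabolic G g (e n) (k n) (y n)"
    and kl: "\<And>n. \<bar>k n\<bar> \<le> l n" and l: "l \<longlonglongrightarrow> 0"
  shows "filterlim (\<lambda>n. \<bar>y n\<bar>) at_top sequentially"
  unfolding filterlim_at_top
proof
  fix Z :: real
  obtain \<delta> where \<delta>: "\<delta> > 0" "\<And>e k y. normal_parabolic G g e k y \<Longrightarrow> \<delta> \<le> \<bar>k\<bar> * (1 + \<bar>y\<bar>)\<^sup>2"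
    using normal_parabolic_size_lower_bound[OF f g] by blast
  define R where "R = max Z 0"
  have "(\<lambda>n. l n * (1 + R)\<^sup>2) \<longlonglongrightarrow> 0 * (1 + R)\<^sup>2" by (intro tendsto_intros l)
  then have "eventually (\<lambda>n. l n * (1 + R)\<^sup>2 < \<delta>) sequentially" using \<delta>(1) by (intro order_tendstoD(2)) auto
  then show "eventually (\<lambda>n. Z \<le> \<bar>y n\<bar>) sequentially"
  proof (rule eventually_mono)
    fix n assume small: "l n * (1 + R)\<^sup>2 < \<delta>"
    show "Z \<le> \<bar>y n\<bar>"
    proof (rule ccontr)
      assume "\<not> Z \<le> \<bar>y n\<bar>"
      then have "\<bar>k n\<bar> * (1 + \<bar>y n\<bar>)\<^sup>2 \<le> l n * (1 + R)\<^sup>2"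
        using kl[of n] unfolding R_def by (intro mult_mono power_mono) auto
      then show False using \<delta> np[of n] small by force
    qed
  qed
qed

lemma diverging_monotone_subseq:
  fixes y :: "nat \<Rightarrow> real"
  assumes y: "filterlim (\<lambda>n. \<bar>y n\<bar>) at_top sequentially" and P: "eventually P sequentially"
  obtains \<tau> where "strict_mono \<tau>" "strict_mono (\<lambda>j. \<bar>y (\<tau> j)\<bar>)" "monoseq (\<lambda>j. y (\<tau> j))" "\<And>j. P (\<tau> j)"
proof -
  obtain N0 where N0: "\<And>n. n \<ge> N0 \<Longrightarrow> P n" using P unfolding eventually_sequentially by blast
  have larger: "\<exists>m > a. \<bar>y m\<bar> > b" for a :: nat and b :: real
  proof -
    obtain M where M: "\<And>n. n \<ge> M \<Longrightarrow> b + 1 \<le> \<bar>y n\<bar>"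
      using y unfolding filterlim_at_top eventually_sequentially by blast
    have "b + 1 \<le> \<bar>y (Suc (max a M))\<bar>" by (rule M) simp
    then show ?thesis by (intro exI[of _ "Suc (max a M)"]) simp
  qed
  define \<sigma> where "\<sigma> = rec_nat N0 (\<lambda>_ s. SOME m. m > s \<and> \<bar>y m\<bar> > \<bar>y s\<bar>)"
  have \<sigma>_Suc: "\<sigma> (Suc j) > \<sigma> j \<and> \<bar>y (\<sigma> (Suc j))\<bar> > \<bar>y (\<sigma> j)\<bar>" for j
    unfolding \<sigma>_def using someI_ex[OF larger[of "\<sigma> j" "\<bar>y (\<sigma> j)\<bar>"]] by (simp add: \<sigma>_def)
  then have \<sigma>: "strict_mono \<sigma>" and y\<sigma>: "strict_mono (\<lambda>j. \<bar>y (\<sigma> j)\<bar>)"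
    unfolding strict_mono_Suc_iff by blast+
  have "\<sigma> j \<ge> N0" for j using strict_mono_less_eq[OF \<sigma>, of 0 j] by (simp add: \<sigma>_def)
  moreover obtain \<phi> where \<phi>: "strict_mono \<phi>" "monoseq (\<lambda>j. y (\<sigma> (\<phi> j)))"
    using seq_monosub[of "\<lambda>j. y (\<sigma> j)"] by blast
  ultimately show thesis
    using that[of "\<sigma> \<circ> \<phi>"] strict_mono_o[OF \<sigma> \<phi>(1)] strict_mono_o[OF y\<sigma> \<phi>(1)] N0 by (simp add: comp_def)
qed

lemma mob_image_disjoint:
  assumes "det g = 1" "A \<subseteq> {z. Im z > 0}" "B \<subseteq> {z. Im z > 0}" "A \<inter> B = {}"
  shows "mob g ` A \<inter> mob g ` B = {}"
  using assms mob_adj2_mob[OF assms(1)] by (smt (verit, best) disjoint_iff image_iff mem_Collect_eq subset_iff)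

lemma normal_parabolic_tangent_horocycles:
  assumes f: "fuchsian G" and u: "u \<in> T1H"
    and np: "\<And>j. normal_parabolic G (frame_mat u) (e j) (k j) (y j)" and y1: "\<And>j. 1 \<le> \<bar>y j\<bar>"
  obtains H p r where "\<And>j. p j \<in> G \<and> parabolic (p j) \<and>
      bd_act (p j) (bd_act (frame_mat u) (Some (y j))) = bd_act (frame_mat u) (Some (y j)) \<and> r j > 0 \<and>
      arclen_param (H j) (horocycle (bd_act (frame_mat u) (Some (y j))) (r j)) \<and>
      (\<forall>s. mob (p j) (H j s) = H j (s + 2*\<bar>y j\<bar>*\<bar>k j\<bar>)) \<and> geod u (ln \<bar>y j\<bar>) = H j 0 \<and>
      (\<exists>v. (geod u has_vector_derivative v) (at (ln \<bar>y j\<bar>)) \<and> (H j has_vector_derivative v) (at 0)) \<and>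
      horoball (bd_act (frame_mat u) (Some (y j))) (r j) = mob (frame_mat u) ` horoball (Some (y j)) \<bar>y j\<bar>"
proof -
  have "\<exists>H p r. p \<in> G \<and> parabolic p \<and>
      bd_act p (bd_act (frame_mat u) (Some (y j))) = bd_act (frame_mat u) (Some (y j)) \<and> r > 0 \<and>
      arclen_param H (horocycle (bd_act (frame_mat u) (Some (y j))) r) \<and>
      (\<forall>s. mob p (H s) = H (s + 2*\<bar>y j\<bar>*\<bar>k j\<bar>)) \<and> geod u (ln \<bar>y j\<bar>) = H 0 \<and>
      (\<exists>v. (geod u has_vector_derivative v) (at (ln \<bar>y j\<bar>)) \<and> (H has_vector_derivative v) (at 0)) \<and>
      horoball (bd_act (frame_mat u) (Some (y j))) r = mob (frame_mat u) ` horoball (Some (y j)) \<bar>y j\<bar>" for j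
    by (rule normal_parabolic_tangent_horocycle[OF f u np y1, of j]) blast
  then show thesis using that by metis
qed

lemma bd_act_frame_back:
  fixes y :: "nat \<Rightarrow> real"
  assumes g: "det g = 1" and mono: "monoseq y" and ylim: "filterlim (\<lambda>j. \<bar>y j\<bar>) at_top sequentially"
  shows "\<exists>g'. det g' = 1 \<and> bd_act g' (bd_act g None) = None \<and> (\<forall>n. bd_act g' (bd_act g (Some (y n))) \<noteq> None) \<and>
    (let y' = (\<lambda>n. the (bd_act g' (bd_act g (Some (y n))))) in
      (mono y' \<or> antimono y') \<and> filterlim (\<lambda>n. \<bar>y' n\<bar>) at_top sequentially)"
proof (intro exI[of _ "adj2 g"] conjI allI)
  show "det (adj2 g) = 1" using g by simp
  show "bd_act (adj2 g) (bd_act g None) = None" by (rule bd_act_adj2_bd_act[OF g])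
  show "bd_act (adj2 g) (bd_act g (Some (y n))) \<noteq> None" for n
    unfolding bd_act_adj2_bd_act[OF g] by simp
  show "let y' = (\<lambda>n. the (bd_act (adj2 g) (bd_act g (Some (y n))))) in
      (mono y' \<or> antimono y') \<and> filterlim (\<lambda>n. \<bar>y' n\<bar>) at_top sequentially"
    unfolding bd_act_adj2_bd_act[OF g] using mono ylim unfolding monoseq_def mono_def antimono_def by simp
qed

lemma tangent_horocycles_of_normal_parabolics:
  fixes y k l :: "nat \<Rightarrow> real"
  assumes f: "fuchsian G" and u: "u \<in> T1H"
    and np: "\<And>j. normal_parabolic G (frame_mat u) (e j) (k j) (y j)"
    and y1: "\<And>j. 1 \<le> \<bar>y j\<bar>" and yl: "\<And>j. 2*\<bar>y j\<bar>*\<bar>k j\<bar> \<le> l j" and l1: "\<And>j. l j \<le> 1"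
    and inc: "strict_mono (\<lambda>j. \<bar>y j\<bar>)" and mono: "monoseq y"
    and ylim: "filterlim (\<lambda>j. \<bar>y j\<bar>) at_top sequentially" and llim: "l \<longlonglongrightarrow> 0"
  shows "\<exists>(H :: nat \<Rightarrow> real \<Rightarrow> complex) (p :: nat \<Rightarrow> mat2) (x :: nat \<Rightarrow> bdpt)
           (r :: nat \<Rightarrow> real) (l :: nat \<Rightarrow> real) (t :: nat \<Rightarrow> real).
     (\<forall>n. p n \<in> G \<and> parabolic (p n) \<and> bd_act (p n) (x n) = x n \<and>
          r n > 0 \<and> arclen_param (H n) (horocycle (x n) (r n)) \<and>
          l n > 0 \<and> (\<forall>s. mob (p n) (H n s) = H n (s + l n)) \<and>
          t n \<ge> 0 \<and>
          (\<exists>s0. geod u (t n) = H n s0 \<and>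
                (\<exists>v. (geod u has_vector_derivative v) (at (t n)) \<and>
                     (H n has_vector_derivative v) (at s0)))) \<and>
     incseq t \<and> filterlim t at_top sequentially \<and>
     inj x \<and>
     (\<exists>g :: mat2. det g = 1 \<and> bd_act g (fwd_end u) = None \<and>
        (\<forall>n. bd_act g (x n) \<noteq> None) \<and>
        (let y = (\<lambda>n. the (bd_act g (x n))) in
           (mono y \<or> antimono y) \<and> filterlim (\<lambda>n. \<bar>y n\<bar>) at_top sequentially)) \<and>
     (\<forall>m n. m \<noteq> n \<longrightarrow> horoball (x m) (r m) \<inter> horoball (x n) (r n) = {}) \<and>
     l \<longlonglongrightarrow> 0"
proof -
  define g where "g = frame_mat u"
  have g: "det g = 1" unfolding g_def using frame_mat[OF u] by simp
  define x L t where "x j = bd_act g (Some (y j))" and "L j = 2*\<bar>y j\<bar>*\<bar>k j\<bar>" and "t j = ln \<bar>y j\<bar>" for j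
  obtain H p r where tangent: "\<And>j. p j \<in> G \<and> parabolic (p j) \<and> bd_act (p j) (x j) = x j \<and> r j > 0 \<and>
      arclen_param (H j) (horocycle (x j) (r j)) \<and> (\<forall>s. mob (p j) (H j s) = H j (s + L j)) \<and> geod u (t j) = H j 0 \<and>
      (\<exists>v. (geod u has_vector_derivative v) (at (t j)) \<and> (H j has_vector_derivative v) (at 0)) \<and>
      horoball (x j) (r j) = mob g ` horoball (Some (y j)) \<bar>y j\<bar>"
    by (rule normal_parabolic_tangent_horocycles[where e = e and k = k and y = y, OF f u np y1])
      (unfold x_def L_def t_def g_def, blast)
  have L_pos: "L j > 0" for j
    using np[of j] y1[of j] unfolding normal_parabolic_def L_def by (simp add: zero_less_mult_iff)
  have y_inj: "y i = y j \<longleftrightarrow> i = j" for i j using strict_mono_eq[OF inc, of i j] by auto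
  show ?thesis
  proof (rule exI[of _ H], rule exI[of _ p], rule exI[of _ x], rule exI[of _ r], rule exI[of _ L],
      rule exI[of _ t], intro conjI)
    show "\<forall>n. p n \<in> G \<and> parabolic (p n) \<and> bd_act (p n) (x n) = x n \<and> r n > 0 \<and>
        arclen_param (H n) (horocycle (x n) (r n)) \<and> L n > 0 \<and> (\<forall>s. mob (p n) (H n s) = H n (s + L n)) \<and>
        t n \<ge> 0 \<and> (\<exists>s0. geod u (t n) = H n s0 \<and>
          (\<exists>v. (geod u has_vector_derivative v) (at (t n)) \<and> (H n has_vector_derivative v) (at s0)))"
      using tangent L_pos y1 unfolding t_def by auto
    show "incseq t"
      unfolding incseq_def t_def
    proof (intro allI impI)
      fix m n :: nat assume "m \<le> n"
      then have "\<bar>y m\<bar> \<le> \<bar>y n\<bar>" using strict_mono_less_eq[OF inc] by blast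
      then show "ln \<bar>y m\<bar> \<le> ln \<bar>y n\<bar>" using y1[of m] by simp
    qed
    show "filterlim t at_top sequentially"
      unfolding t_def using filterlim_compose[OF ln_at_top ylim] by (simp add: comp_def)
    show "inj x"
    proof (rule injI)
      fix i j assume "x i = x j"
      then have "Some (y i) = Some (y j)" unfolding x_def by (metis bd_act_adj2_bd_act[OF g])
      then show "i = j" using y_inj by simp
    qed
    show "\<exists>g'. det g' = 1 \<and> bd_act g' (fwd_end u) = None \<and> (\<forall>n. bd_act g' (x n) \<noteq> None) \<and>
        (let y = (\<lambda>n. the (bd_act g' (x n))) in (mono y \<or> antimono y) \<and> filterlim (\<lambda>n. \<bar>y n\<bar>) at_top sequentially)"
      using bd_act_frame_back[OF g mono ylim] unfolding fwd_end_eq_frame_mat[OF u] x_def g_def .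
    show "\<forall>m n. m \<noteq> n \<longrightarrow> horoball (x m) (r m) \<inter> horoball (x n) (r n) = {}"
    proof (intro allI impI)
      fix m n :: nat assume "m \<noteq> n"
      moreover have "2*\<bar>y j\<bar>*\<bar>k j\<bar> \<le> 1" for j using yl[of j] l1[of j] by linarith
      ultimately have "horoball (Some (y m)) \<bar>y m\<bar> \<inter> horoball (Some (y n)) \<bar>y n\<bar> = {}"
        using normal_parabolic_horoballs_disjoint[OF f g np[of m, folded g_def] np[of n, folded g_def]]
          y_inj[of m n] by blast
      moreover have "horoball (Some (y j)) \<bar>y j\<bar> \<subseteq> {z. Im z > 0}" for j
        using horoball_Im_pos[of "\<bar>y j\<bar>" _ "Some (y j)"] y1[of j] by force
      ultimately show "horoball (x m) (r m) \<inter> horoball (x n) (r n) = {}"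
        using tangent[of m] tangent[of n] mob_image_disjoint[OF g] by presburger
    qed
    show "L \<longlonglongrightarrow> 0"
      using yl llim by (intro tendsto_sandwich[of "\<lambda>_. 0" L sequentially l]) (simp_all add: always_eventually L_def)
  qed
qed

theorem mainTheorem5:
  fixes G :: "mat2 set" and u :: "complex \<times> complex"
  assumes "fuchsian G" and "torsion_free G"
    and "\<exists>p\<in>G. parabolic p"
    and "u \<in> T1H"
    and "cusp_recurrent G u"
  shows "\<exists>(H :: nat \<Rightarrow> real \<Rightarrow> complex) (p :: nat \<Rightarrow> mat2) (x :: nat \<Rightarrow> bdpt)
           (r :: nat \<Rightarrow> real) (l :: nat \<Rightarrow> real) (t :: nat \<Rightarrow> real).
     (\<forall>n. p n \<in> G \<and> parabolic (p n) \<and> bd_act (p n) (x n) = x n \<and>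
          r n > 0 \<and> arclen_param (H n) (horocycle (x n) (r n)) \<and>
          l n > 0 \<and> (\<forall>s. mob (p n) (H n s) = H n (s + l n)) \<and>
          t n \<ge> 0 \<and>
          (\<exists>s0. geod u (t n) = H n s0 \<and>
                (\<exists>v. (geod u has_vector_derivative v) (at (t n)) \<and>
                     (H n has_vector_derivative v) (at s0)))) \<and>
     incseq t \<and> filterlim t at_top sequentially \<and>
     inj x \<and>
     (\<exists>g :: mat2. det g = 1 \<and> bd_act g (fwd_end u) = None \<and>
        (\<forall>n. bd_act g (x n) \<noteq> None) \<and>
        (let y = (\<lambda>n. the (bd_act g (x n))) in
           (mono y \<or> antimono y) \<and> filterlim (\<lambda>n. \<bar>y n\<bar>) at_top sequentially)) \<and>
     (\<forall>m n. m \<noteq> n \<longrightarrow> horoball (x m) (r m) \<inter> horoball (x n) (r n) = {}) \<and>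
     l \<longlonglongrightarrow> 0"
proof -
  obtain e k y l where np: "\<And>n. normal_parabolic G (frame_mat u) (e n) (k n) (y n)"
    and kl: "\<And>n. \<bar>k n\<bar> \<le> l n" and yl: "\<And>n. 2*\<bar>y n\<bar>*\<bar>k n\<bar> \<le> l n" and l: "l \<longlonglongrightarrow> 0"
    using cusp_recurrent_normal_parabolics[OF assms(1,4,5)] by blast
  have y: "filterlim (\<lambda>n. \<bar>y n\<bar>) at_top sequentially"
    using normal_parabolics_diverge[OF assms(1) frame_mat(1)[OF assms(4)] np kl l] .
  have "eventually (\<lambda>n. 1 \<le> \<bar>y n\<bar>) sequentially" using y unfolding filterlim_at_top by blast
  moreover have "eventually (\<lambda>n. l n \<le> 1) sequentially"
    using order_tendstoD(2)[OF l, of 1] by (auto elim: eventually_mono)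
  ultimately have "eventually (\<lambda>n. 1 \<le> \<bar>y n\<bar> \<and> l n \<le> 1) sequentially" by (rule eventually_conj)
  then obtain \<tau> where \<tau>: "strict_mono \<tau>" "strict_mono (\<lambda>j. \<bar>y (\<tau> j)\<bar>)" "monoseq (\<lambda>j. y (\<tau> j))"
    "\<And>j. 1 \<le> \<bar>y (\<tau> j)\<bar> \<and> l (\<tau> j) \<le> 1"
    using diverging_monotone_subseq[OF y] by blast
  have "filterlim (\<lambda>j. \<bar>y (\<tau> j)\<bar>) at_top sequentially"
    using filterlim_compose[OF y filterlim_subseq[OF \<tau>(1)]] by (simp add: comp_def)
  moreover have "(\<lambda>j. l (\<tau> j)) \<longlonglongrightarrow> 0" using LIMSEQ_subseq_LIMSEQ[OF l \<tau>(1)] by (simp add: comp_def)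
  ultimately show ?thesis
    by (intro tangent_horocycles_of_normal_parabolics[OF assms(1,4), where e="\<lambda>j. e (\<tau> j)"
          and k="\<lambda>j. k (\<tau> j)" and y="\<lambda>j. y (\<tau> j)" and l="\<lambda>j. l (\<tau> j)"])
      (use np yl \<tau> in auto)
qed

end
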